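(* If $(A_n)_{n=0}^\infty$ is an Appell sequence with constants $c_n$ defined by $\log f_A(t)=\sum_{k\ge1}c_k\frac{t^k}{k!}$, then for all partitions $\lambda$, \begin{align*} (\lvert \lambda \rvert +1) (x+c_1) F_\lambda A_\lambda &= \sum_{\gamma \gtrdot \lambda} F_\gamma A_\gamma,\\ k c_k \binom{\lvert \lambda \rvert +k}{k} F_\lambda A_\lambda &= \sum_{\gamma:\ \gamma/\lambda \text{ is a rim hook of size } k} (-1)^{\operatorname{ht}(\gamma/\lambda)} F_\gamma A_\gamma \qquad (k \geq 2), \end{align*} where in the first sum $\gamma$ ranges over partitions covering $\lambda$ in Young's lattice (obtained by adding one cell).
   Context: An Appell sequence is a sequence of polynomials $(A_n)_{n\ge0}$ with $A_0=1$ and $A_n'=nA_{n-1}$ for $n\ge1$; it satisfies $\sum_k A_k(x)t^k/k!=e^{xt}f_A(t)$ with $f_A(0)=1$. For a partition $\lambda$ of length $r$, let $(n_1,\dots,n_r)=(\lambda_r,\lambda_{r-1}+1,\dots,\lambda_1+r-1)$ and $A_\lambda=\operatorname{Wr}[A_{n_1},\dots,A_{n_r}]/\Delta(n_1,\dots,n_r)$, where $\operatorname{Wr}$ is the Wronskian and $\Delta$ the Vandermonde determinant $\prod_{i<j}(x_j-x_i)$. $F_\lambda$ is the number of standard Young tableaux of shape $\lambda$. A rim hook of size $k$ is a skew diagram $\gamma/\lambda$ with $|\gamma|-|\lambda|=k$ that is connected and contains no $2\times2$ square; its height $\operatorname{ht}(\gamma/\lambda)$ is one less than the number of rows it occupies.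 *)

theory Defs
  imports "HOL-Computational_Algebra.Polynomial" "HOL-Computational_Algebra.Formal_Power_Series"
    "Jordan_Normal_Form.Determinant"
begin

definition appell :: "(nat \<Rightarrow> 'a::field_char_0 poly) \<Rightarrow> bool" where
  "appell A \<longleftrightarrow> A 0 = 1 \<and> (\<forall>n\<ge>1. pderiv (A n) = smult (of_nat n) (A (n - 1)))"

text \<open>f_A(t) = sum_k A_k(0) t^k/k!, so that sum_k A_k(x) t^k/k! = e^{xt} f_A(t).\<close>
definition appell_f :: "(nat \<Rightarrow> 'a::field_char_0 poly) \<Rightarrow> 'a fps" where
  "appell_f A = Abs_fps (\<lambda>k. poly (A k) 0 / fact k)"

text \<open>Formal logarithm of a power series with constant term 1: log f = ln(1+X) composed with f - 1.\<close>
definition fps_log :: "'a::field_char_0 fps \<Rightarrow> 'a fps" where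
  "fps_log f = fps_ln 1 oo (f - 1)"

definition is_partition :: "nat list \<Rightarrow> bool" where
  "is_partition la \<longleftrightarrow> sorted_wrt (\<ge>) la \<and> (\<forall>x\<in>set la. 0 < x)"

definition psize :: "nat list \<Rightarrow> nat" where
  "psize la = sum_list la"

text \<open>Cells (row, column), 0-indexed.\<close>
definition diagram :: "nat list \<Rightarrow> (nat \<times> nat) set" where
  "diagram la = {(i, j). i < length la \<and> j < la ! i}"

definition SYT :: "nat list \<Rightarrow> ((nat \<times> nat) \<Rightarrow> nat) set" where
  "SYT la = {T. bij_betw T (diagram la) {1..psize la} \<and> (\<forall>c. c \<notin> diagram la \<longrightarrow> T c = 0) \<and>
     (\<forall>i j. (i, Suc j) \<in> diagram la \<longrightarrow> T (i, j) < T (i, Suc j)) \<and>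
     (\<forall>i j. (Suc i, j) \<in> diagram la \<longrightarrow> T (i, j) < T (Suc i, j))}"

definition num_SYT :: "nat list \<Rightarrow> nat" ("F") where
  "num_SYT la = card (SYT la)"

definition covers :: "nat list \<Rightarrow> nat list \<Rightarrow> bool" where
  "covers ga la \<longleftrightarrow> is_partition ga \<and> is_partition la \<and> diagram la \<subseteq> diagram ga \<and> psize ga = psize la + 1"

definition skew :: "nat list \<Rightarrow> nat list \<Rightarrow> (nat \<times> nat) set" where
  "skew ga la = diagram ga - diagram la"

definition adjacent :: "nat \<times> nat \<Rightarrow> nat \<times> nat \<Rightarrow> bool" where
  "adjacent c d \<longleftrightarrow> (fst c = fst d \<and> (snd c = Suc (snd d) \<or> snd d = Suc (snd c))) \<or>
                     (snd c = snd d \<and> (fst c = Suc (fst d) \<or> fst d = Suc (fst c)))"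

definition cell_connected :: "(nat \<times> nat) set \<Rightarrow> bool" where
  "cell_connected S \<longleftrightarrow> S \<noteq> {} \<and>
     (\<forall>c\<in>S. \<forall>d\<in>S. (\<lambda>x y. x \<in> S \<and> y \<in> S \<and> adjacent x y)\<^sup>*\<^sup>* c d)"

definition no_2x2 :: "(nat \<times> nat) set \<Rightarrow> bool" where
  "no_2x2 S \<longleftrightarrow> \<not> (\<exists>i j. {(i, j), (Suc i, j), (i, Suc j), (Suc i, Suc j)} \<subseteq> S)"

definition rim_hook :: "nat list \<Rightarrow> nat list \<Rightarrow> nat \<Rightarrow> bool" where
  "rim_hook ga la k \<longleftrightarrow> is_partition ga \<and> is_partition la \<and> diagram la \<subseteq> diagram ga \<and>
     psize ga = psize la + k \<and> cell_connected (skew ga la) \<and> no_2x2 (skew ga la)"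

definition ht :: "nat list \<Rightarrow> nat list \<Rightarrow> nat" where
  "ht ga la = card (fst ` skew ga la) - 1"

definition wronskian :: "'a::idom poly list \<Rightarrow> 'a poly" where
  "wronskian ps = det (mat (length ps) (length ps) (\<lambda>(i, j). (pderiv ^^ i) (ps ! j)))"

definition vandermonde :: "nat list \<Rightarrow> int" where
  "vandermonde ns = (\<Prod>j<length ns. \<Prod>i<j. int (ns ! j) - int (ns ! i))"

text \<open>(n_1,...,n_r) = (lambda_r, lambda_{r-1}+1, ..., lambda_1+r-1), 0-indexed here.\<close>
definition shifted_parts :: "nat list \<Rightarrow> nat list" where
  "shifted_parts la = map (\<lambda>i. la ! (length la - 1 - i) + i) [0..<length la]"

definition appell_schur :: "(nat \<Rightarrow> 'a::field_char_0 poly) \<Rightarrow> nat list \<Rightarrow> 'a poly" where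
  "appell_schur A la = smult (1 / of_int (vandermonde (shifted_parts la)))
     (wronskian (map A (shifted_parts la)))"

end

theory Submission
  imports Defs
begin

text \<open>The polynomials \<open>h\<^sub>m = A\<^sub>m / m!\<close> are the coefficients of \<open>H(t) = e\<^sup>x\<^sup>t f\<^sub>A(t)\<close>, and the
  Wronskian of \<open>A\<^sub>n\<^sub>1, \<dots>, A\<^sub>n\<^sub>r\<close> is \<open>\<Prod> n\<^sub>j!\<close> times the Jacobi--Trudi determinant \<open>det [h\<^sub>n\<^sub>j\<^sub>-\<^sub>i]\<close>.
  Frobenius' formula \<open>F\<^sub>\<lambda> \<Prod> n\<^sub>j! = |\<lambda>|! \<Delta>(n)\<close> turns this into \<open>F\<^sub>\<lambda> A\<^sub>\<lambda> = |\<lambda>|! det [h\<^sub>n\<^sub>j\<^sub>-\<^sub>i]\<close>.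

  Raising one \<open>n\<^sub>j\<close> by \<open>k\<close> and summing over \<open>j\<close> multiplies the determinant by the power sum
  \<open>p\<^sub>k = \<Sum>\<^sub>d (k - d) g\<^sub>d h\<^sub>k\<^sub>-\<^sub>d\<close>, where \<open>g = 1/H\<close>; comparing coefficients in \<open>H'/H = x + (log f\<^sub>A)'\<close> gives
  \<open>p\<^sub>1 = x + c\<^sub>1\<close> and \<open>p\<^sub>k = k c\<^sub>k / k!\<close>. On the other hand, viewing the \<open>n\<^sub>j\<close> as beads on an abacus, a
  raised determinant vanishes unless the bead lands on a free position, and is then \<open>(-1)\<^sup>h\<^sup>t\<close> times
  the determinant of \<open>\<lambda>\<close> with a rim hook of size \<open>k\<close> added; every such rim hook arises exactly once.\<close>

section \<open>Jacobi--Trudi determinants\<close>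

lemma det_replace_col:
  assumes A: "A \<in> carrier_mat n n" and k: "k < n"
  shows "det (mat n n (\<lambda>(i, j). if j = k then b i else A $$ (i, j))) = (\<Sum>i<n. b i * cofactor A i k)"
proof -
  let ?M = "mat n n (\<lambda>(i, j). if j = k then b i else A $$ (i, j))"
  have "det ?M = (\<Sum>i<n. ?M $$ (i, k) * cofactor ?M i k)"
    by (rule laplace_expansion_column) (use k in auto)
  also have "\<dots> = (\<Sum>i<n. b i * cofactor A i k)"
  proof (rule sum.cong[OF refl])
    fix i assume i: "i \<in> {..<n}"
    have "mat_delete ?M i k = mat_delete A i k"
      using A k i by (intro eq_matI) (auto simp: mat_delete_def)
    then show "?M $$ (i, k) * cofactor ?M i k = b i * cofactor A i k"
      using i k by (simp add: cofactor_def)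
  qed
  finally show ?thesis .
qed

lemma sum_row_mult_cofactor:
  assumes A: "A \<in> carrier_mat n n" and a: "a < n" and i: "i < n"
  shows "(\<Sum>j<n. A $$ (a, j) * cofactor A i j) = (if a = i then det A else 0)"
proof -
  have "(A * adj_mat A) $$ (a, i) = (det A \<cdot>\<^sub>m 1\<^sub>m n) $$ (a, i)"
    using adj_mat(2)[OF A] by simp
  moreover have "(A * adj_mat A) $$ (a, i) = (\<Sum>j<n. A $$ (a, j) * cofactor A i j)"
    using A a i adj_mat(1)[OF A] unfolding times_mat_def scalar_prod_def adj_mat_def
    by (auto intro!: sum.cong simp: lessThan_atLeast0)
  ultimately show ?thesis using a i by auto
qed

lemma cofactor_eq_det_mult_solution:
  assumes A: "A \<in> carrier_mat n n" and z: "z \<in> carrier_vec n" and i: "i < n" and j: "j < n"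
    and sol: "A *\<^sub>v z = unit_vec n i"
  shows "cofactor A i j = det A * z $ j"
proof -
  have "adj_mat A *\<^sub>v (A *\<^sub>v z) = (adj_mat A * A) *\<^sub>v z"
    using A z adj_mat(1)[OF A] by (metis assoc_mult_mat_vec)
  also have "\<dots> = det A \<cdot>\<^sub>v z"
    using z adj_mat(3)[OF A] by auto
  finally have eq: "adj_mat A *\<^sub>v unit_vec n i = det A \<cdot>\<^sub>v z"
    using sol by simp
  have "cofactor A i j = (adj_mat A *\<^sub>v unit_vec n i) $ j"
    using A adj_mat(1)[OF A] i j by (simp add: adj_mat_def)
  then show ?thesis using eq z j by simp
qed

lemma det_mult_cols:
  fixes c :: "nat \<Rightarrow> 'b::comm_ring_1"
  shows "det (mat n n (\<lambda>(i, j). c j * M i j)) = (\<Prod>j<n. c j) * det (mat n n (\<lambda>(i, j). M i j))"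
proof -
  have "det (mat n n (\<lambda>(i, j). c j * M i j)) =
      (\<Sum>p\<in>{p. p permutes {0..<n}}. signof p * (\<Prod>i=0..<n. c (p i) * M i (p i)))"
    by (subst det_def'[of _ n]) auto
  also have "\<dots> = (\<Sum>p\<in>{p. p permutes {0..<n}}. (\<Prod>j<n. c j) * (signof p * (\<Prod>i=0..<n. M i (p i))))"
  proof (intro sum.cong refl)
    fix p assume "p \<in> {p. p permutes {0..<n}}"
    then have "(\<Prod>i=0..<n. c (p i)) = (\<Prod>j=0..<n. c j)"
      using prod.permute[of p "{0..<n}" c] by (simp add: comp_def)
    then show "signof p * (\<Prod>i=0..<n. c (p i) * M i (p i)) =
        (\<Prod>j<n. c j) * (signof p * (\<Prod>i=0..<n. M i (p i)))"
      by (simp add: prod.distrib lessThan_atLeast0 mult_ac)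
  qed
  also have "\<dots> = (\<Prod>j<n. c j) * det (mat n n (\<lambda>(i, j). M i j))"
    by (subst det_def'[of _ n]) (auto simp: sum_distrib_left)
  finally show ?thesis .
qed

definition jt_entry :: "(nat \<Rightarrow> 'b::comm_ring_1) \<Rightarrow> nat \<Rightarrow> nat \<Rightarrow> 'b" where
  "jt_entry h m i = (if i \<le> m then h (m - i) else 0)"

definition jt_matrix :: "(nat \<Rightarrow> 'b::comm_ring_1) \<Rightarrow> nat list \<Rightarrow> 'b mat" where
  "jt_matrix h ns = mat (length ns) (length ns) (\<lambda>(i, j). jt_entry h (ns ! j) i)"

definition jacobi_trudi :: "(nat \<Rightarrow> 'b::comm_ring_1) \<Rightarrow> nat list \<Rightarrow> 'b" where
  "jacobi_trudi h ns = det (jt_matrix h ns)"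

lemma jt_matrix_carrier: "jt_matrix h ns \<in> carrier_mat (length ns) (length ns)"
  by (simp add: jt_matrix_def)

lemma jacobi_trudi_swap:
  "jacobi_trudi h (xs @ a # b # ys) = - jacobi_trudi h (xs @ b # a # ys)"
proof -
  let ?A = "jt_matrix h (xs @ b # a # ys)"
  have "swapcols (length xs) (Suc (length xs)) ?A = jt_matrix h (xs @ a # b # ys)"
    by (intro eq_matI) (auto simp: jt_matrix_def mat_swapcols_def nth_append)
  moreover have "det (swapcols (length xs) (Suc (length xs)) ?A) = - det ?A"
    by (rule det_swapcols[OF _ _ _ jt_matrix_carrier]) auto
  ultimately show ?thesis by (simp add: jacobi_trudi_def)
qed

lemma jacobi_trudi_move:
  "jacobi_trudi h (xs @ v # ys @ zs) = (-1) ^ length ys * jacobi_trudi h (xs @ ys @ v # zs)"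
proof (induction ys arbitrary: xs)
  case Nil
  then show ?case by simp
next
  case (Cons y ys)
  have "jacobi_trudi h (xs @ v # (y # ys) @ zs) = - jacobi_trudi h ((xs @ [y]) @ v # ys @ zs)"
    using jacobi_trudi_swap[of h xs v y "ys @ zs"] by simp
  also have "\<dots> = - ((-1) ^ length ys * jacobi_trudi h (xs @ (y # ys) @ v # zs))"
    using Cons.IH[of "xs @ [y]"] by simp
  finally show ?case by simp
qed

lemma jacobi_trudi_eq_0_if_repeated:
  assumes "i < length ns" "j < length ns" "i \<noteq> j" "ns ! i = ns ! j"
  shows "jacobi_trudi h ns = 0"
  unfolding jacobi_trudi_def jt_matrix_def
  by (rule det_identical_columns[of _ "length ns" i j]) (use assms in auto)

lemma jacobi_trudi_Cons_0:
  assumes h0: "h 0 = 1"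
  shows "jacobi_trudi h (0 # map Suc ns) = jacobi_trudi h ns"
proof -
  let ?M = "jt_matrix h (0 # map Suc ns)"
  have M: "?M \<in> carrier_mat (Suc (length ns)) (Suc (length ns))"
    using jt_matrix_carrier[of h "0 # map Suc ns"] by simp
  have "det ?M = (\<Sum>i<Suc (length ns). ?M $$ (i, 0) * cofactor ?M i 0)"
    by (rule laplace_expansion_column[OF M]) simp
  also have "\<dots> = (\<Sum>i<Suc (length ns). if i = 0 then cofactor ?M 0 0 else 0)"
    by (intro sum.cong refl) (auto simp: jt_matrix_def jt_entry_def h0)
  also have "\<dots> = det (mat_delete ?M 0 0)"
    by (simp add: cofactor_def)
  also have "mat_delete ?M 0 0 = jt_matrix h ns"
    by (intro eq_matI) (auto simp: jt_matrix_def mat_delete_def jt_entry_def)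
  finally show ?thesis by (simp add: jacobi_trudi_def)
qed

lemma jacobi_trudi_update:
  assumes j: "j < length ns"
  shows "jacobi_trudi h (ns[j := m]) = (\<Sum>i<length ns. jt_entry h m i * cofactor (jt_matrix h ns) i j)"
proof -
  have "jt_matrix h (ns[j := m]) =
      mat (length ns) (length ns) (\<lambda>(i, j'). if j' = j then jt_entry h m i else jt_matrix h ns $$ (i, j'))"
    by (intro eq_matI) (auto simp: jt_matrix_def nth_list_update)
  then show ?thesis
    by (simp add: jacobi_trudi_def det_replace_col[OF jt_matrix_carrier j])
qed

text \<open>Coefficients of \<open>1/h\<close> for \<open>h 0 = 1\<close>. The library's \<^const>\<open>inverse\<close> on power series needs a
  field of coefficients, but \<open>h\<close> will have polynomial coefficients.\<close>

fun inv_seq :: "(nat \<Rightarrow> 'b::comm_ring_1) \<Rightarrow> nat \<Rightarrow> 'b" where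
  "inv_seq h 0 = 1"
| "inv_seq h (Suc n) = - (\<Sum>i\<le>n. inv_seq h i * h (Suc n - i))"

lemma inv_seq_convolution:
  assumes h0: "h 0 = 1"
  shows "(\<Sum>d\<le>m. inv_seq h d * h (m - d)) = (if m = 0 then 1 else 0)"
proof (cases m)
  case (Suc n)
  then have "(\<Sum>d\<le>m. inv_seq h d * h (m - d)) =
      (\<Sum>d\<le>n. inv_seq h d * h (Suc n - d)) + inv_seq h (Suc n) * h 0"
    by simp
  then show ?thesis using Suc by (simp add: h0)
qed (simp add: h0)

lemma sum_partial_sums:
  fixes f :: "nat \<Rightarrow> 'c::comm_ring_1"
  shows "(\<Sum>i<k. \<Sum>d\<le>i. f d) = (\<Sum>d<k. of_nat (k - d) * f d)"
proof (induction k)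
  case (Suc k)
  have "(\<Sum>d<k. of_nat (Suc k - d) * f d) = (\<Sum>d<k. of_nat (k - d) * f d) + (\<Sum>d<k. f d)"
    by (simp add: sum.distrib[symmetric] Suc_diff_le algebra_simps)
  then show ?case using Suc by (simp add: lessThan_Suc_atMost[symmetric] algebra_simps)
qed simp

context
  fixes h g :: "nat \<Rightarrow> 'b::comm_ring_1"
  assumes inverse: "\<And>m. (\<Sum>d\<le>m. g d * h (m - d)) = (if m = 0 then 1 else 0)"
begin

lemma sum_jt_entry_mult_inverse:
  "(\<Sum>j\<le>i. jt_entry h j a * g (i - j)) = (if a = i then 1 else 0)"
proof (cases "a \<le> i")
  case True
  have "(\<Sum>j\<le>i. jt_entry h j a * g (i - j)) = (\<Sum>j\<in>{a..i}. h (j - a) * g (i - j))"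
    by (subst sum.mono_neutral_right[of "{..i}" "{a..i}"]) (auto simp: jt_entry_def)
  also have "\<dots> = (\<Sum>d\<le>i - a. g d * h (i - a - d))"
    by (rule sum.reindex_bij_witness[where i="\<lambda>d. i - d" and j="\<lambda>j. i - j"])
       (use True in \<open>auto simp: algebra_simps\<close>)
  finally show ?thesis using inverse[of "i - a"] True by auto
qed (auto simp: jt_entry_def intro!: sum.neutral)

text \<open>On the initial rows, where \<open>ns ! j = j\<close>, the matrix is unitriangular Toeplitz and its
  adjugate is read off from the reciprocal series.\<close>

lemma cofactor_jt_matrix_initial:
  assumes i: "i < length ns" and j: "j < length ns" and init: "\<And>j. j \<le> i \<Longrightarrow> ns ! j = j"
  shows "cofactor (jt_matrix h ns) i j = jacobi_trudi h ns * (if j \<le> i then g (i - j) else 0)"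
proof -
  define r where "r = length ns"
  define z where "z = vec r (\<lambda>j. if j \<le> i then g (i - j) else 0)"
  have "jt_matrix h ns *\<^sub>v z = unit_vec r i"
  proof (rule eq_vecI)
    fix a assume "a < dim_vec (unit_vec r i)"
    then have a: "a < r" by simp
    have "(jt_matrix h ns *\<^sub>v z) $ a = (\<Sum>j<r. jt_matrix h ns $$ (a, j) * z $ j)"
      using a by (simp add: r_def z_def jt_matrix_def mult_mat_vec_def scalar_prod_def lessThan_atLeast0)
    also have "\<dots> = (\<Sum>j\<le>i. jt_matrix h ns $$ (a, j) * z $ j)"
      using i by (intro sum.mono_neutral_right) (auto simp: r_def z_def)
    also have "\<dots> = (\<Sum>j\<le>i. jt_entry h j a * g (i - j))"
      using i a init by (intro sum.cong refl) (auto simp: r_def jt_matrix_def z_def)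
    also have "\<dots> = unit_vec r i $ a"
      using a i by (simp add: sum_jt_entry_mult_inverse unit_vec_def r_def)
    finally show "(jt_matrix h ns *\<^sub>v z) $ a = unit_vec r i $ a" .
  qed (simp add: r_def jt_matrix_def)
  then show ?thesis
    using cofactor_eq_det_mult_solution[OF jt_matrix_carrier, where z=z and i=i and j=j] i j
    by (simp add: r_def z_def jacobi_trudi_def)
qed

text \<open>The determinantal form of the Murnaghan--Nakayama rule: the factor is the \<open>k\<close>-th power
  sum, expressed through \<open>h\<close> and its reciprocal \<open>g\<close>.\<close>

lemma jacobi_trudi_raise_sum:
  assumes k: "1 \<le> k" "k \<le> length ns" and init: "\<And>j. j < k \<Longrightarrow> ns ! j = j"
  shows "(\<Sum>j<length ns. jacobi_trudi h (ns[j := ns ! j + k])) =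
    (\<Sum>d<k. of_nat (k - d) * g d * h (k - d)) * jacobi_trudi h ns"
proof -
  define r where "r = length ns"
  define V where "V = jt_matrix h ns"
  have V: "V \<in> carrier_mat r r" by (simp add: V_def r_def jt_matrix_carrier)
  have high_row: "(\<Sum>j<r. jt_entry h (ns ! j + k) i * cofactor V i j) = 0"
    if "k \<le> i" "i < r" for i
  proof -
    have "(\<Sum>j<r. jt_entry h (ns ! j + k) i * cofactor V i j) = (\<Sum>j<r. V $$ (i - k, j) * cofactor V i j)"
      using that by (intro sum.cong refl) (auto simp: V_def r_def jt_matrix_def jt_entry_def)
    then show ?thesis using sum_row_mult_cofactor[OF V, of "i - k" i] that k by simp
  qed
  have low_row: "(\<Sum>j<r. jt_entry h (ns ! j + k) i * cofactor V i j) =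
      jacobi_trudi h ns * (\<Sum>d\<le>i. g d * h (k - d))" if i: "i < k" for i
  proof -
    have "(\<Sum>j<r. jt_entry h (ns ! j + k) i * cofactor V i j) =
        (\<Sum>j<r. jt_entry h (ns ! j + k) i * (jacobi_trudi h ns * (if j \<le> i then g (i - j) else 0)))"
      using i k init by (intro sum.cong refl) (simp add: V_def r_def cofactor_jt_matrix_initial)
    also have "\<dots> = (\<Sum>j\<le>i. h (j + k - i) * (jacobi_trudi h ns * g (i - j)))"
      using i k init by (subst sum.mono_neutral_right[of "{..<r}" "{..i}"])
        (auto intro!: sum.cong simp: r_def jt_entry_def)
    also have "\<dots> = jacobi_trudi h ns * (\<Sum>j\<le>i. h (j + k - i) * g (i - j))"
      by (simp add: sum_distrib_left mult_ac)
    also have "(\<Sum>j\<le>i. h (j + k - i) * g (i - j)) = (\<Sum>d\<le>i. g d * h (k - d))"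
      using i by (subst (2) atLeast0AtMost[symmetric], subst sum.atLeastAtMost_rev)
        (auto intro!: sum.cong simp: atLeast0AtMost algebra_simps)
    finally show ?thesis .
  qed
  have "(\<Sum>j<r. jacobi_trudi h (ns[j := ns ! j + k])) =
      (\<Sum>j<r. \<Sum>i<r. jt_entry h (ns ! j + k) i * cofactor V i j)"
    by (simp add: r_def V_def jacobi_trudi_update)
  also have "\<dots> = (\<Sum>i<r. \<Sum>j<r. jt_entry h (ns ! j + k) i * cofactor V i j)"
    by (rule sum.swap)
  also have "\<dots> = (\<Sum>i<k. \<Sum>j<r. jt_entry h (ns ! j + k) i * cofactor V i j)"
    using high_row k by (intro sum.mono_neutral_right) (auto simp: r_def)
  also have "\<dots> = jacobi_trudi h ns * (\<Sum>i<k. \<Sum>d\<le>i. g d * h (k - d))"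
    by (simp add: low_row sum_distrib_left)
  finally show ?thesis
    by (simp add: r_def sum_partial_sums sum_distrib_right mult_ac)
qed

end

section \<open>Appell sequences\<close>

lemma appell_pderiv: "appell A \<Longrightarrow> 1 \<le> n \<Longrightarrow> pderiv (A n) = smult (of_nat n) (A (n - 1))"
  by (simp add: appell_def)

lemma higher_pderiv_appell:
  assumes "appell A"
  shows "(pderiv ^^ i) (A m) = (if i \<le> m then smult (fact m / fact (m - i)) (A (m - i)) else 0)"
proof (induction i)
  case (Suc i)
  show ?case
  proof (cases "Suc i \<le> m")
    case True
    then obtain t where t: "m - i = Suc t" "m - Suc i = t"
      by (metis Suc_diff_Suc Suc_le_lessD diff_Suc_Suc)
    have "(pderiv ^^ Suc i) (A m) = smult (fact m / fact (m - i) * of_nat (m - i)) (A (m - Suc i))"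
      using Suc True appell_pderiv[OF assms, of "m - i"] by (simp add: pderiv_smult)
    also have "fact m / fact (m - i) * of_nat (m - i) = (fact m / fact (m - Suc i) :: 'a)"
      unfolding t by (simp add: field_simps del: of_nat_Suc)
    finally show ?thesis using True by simp
  next
    case False
    then show ?thesis
      using Suc assms by (cases "i = m") (auto simp: appell_def pderiv_smult)
  qed
qed simp

definition appell_coeff :: "(nat \<Rightarrow> 'a::field_char_0 poly) \<Rightarrow> nat \<Rightarrow> 'a poly" where
  "appell_coeff A m = smult (inverse (fact m)) (A m)"

lemma appell_coeff_0: "appell A \<Longrightarrow> appell_coeff A 0 = 1"
  by (simp add: appell_coeff_def appell_def)

lemma wronskian_appell:
  assumes "appell A"
  shows "wronskian (map A ns) = of_nat (\<Prod>j<length ns. fact (ns ! j)) * jacobi_trudi (appell_coeff A) ns"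
proof -
  have entry: "(pderiv ^^ i) (A m) = fact m * jt_entry (appell_coeff A) m i" for i m
  proof -
    have "(fact m :: 'a poly) * p = smult (fact m) p" for p
      by (metis of_nat_fact of_nat_mult_conv_smult)
    then show ?thesis
      by (simp add: higher_pderiv_appell[OF assms] jt_entry_def appell_coeff_def divide_inverse)
  qed
  have "wronskian (map A ns) =
      det (mat (length ns) (length ns) (\<lambda>(i, j). fact (ns ! j) * jt_entry (appell_coeff A) (ns ! j) i))"
    unfolding wronskian_def
    by (intro arg_cong[of _ _ det] eq_matI) (auto simp: entry)
  then show ?thesis
    by (simp add: det_mult_cols jacobi_trudi_def jt_matrix_def)
qed

definition fps_lift :: "'a::comm_ring_1 fps \<Rightarrow> 'a poly fps" where
  "fps_lift f = Abs_fps (\<lambda>m. [:fps_nth f m:])"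

lemma fps_lift_mult: "fps_lift (f * g) = fps_lift f * fps_lift g"
  by (rule fps_ext) (simp add: fps_lift_def fps_mult_nth sum_to_poly mult_ac)

lemma fps_lift_deriv: "fps_lift (fps_deriv f) = fps_deriv (fps_lift f)"
  by (rule fps_ext) (simp add: fps_lift_def of_nat_poly)

definition exp_xt :: "'a::field_char_0 poly fps" where
  "exp_xt = Abs_fps (\<lambda>m. monom (inverse (fact m)) m)"

lemma fps_deriv_exp_xt: "fps_deriv exp_xt = fps_const [:0, 1:] * (exp_xt :: 'a::field_char_0 poly fps)"
proof (rule fps_ext)
  fix m
  have "(of_nat (Suc m) * inverse (fact (Suc m)) :: 'a) = inverse (fact m)"
    by (simp add: field_simps del: of_nat_Suc)
  then show "fps_nth (fps_deriv (exp_xt :: 'a poly fps)) m = fps_nth (fps_const [:0, 1:] * exp_xt) m"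
    by (simp add: exp_xt_def of_nat_monom mult_monom monom_Suc del: of_nat_Suc fact_Suc)
qed

lemma exp_xt_mult_nth: "fps_nth (exp_xt * fps_lift f) m = (\<Sum>i\<le>m. monom (fps_nth f (m - i) / fact i) i)"
  unfolding fps_mult_nth atLeast0AtMost
  by (intro sum.cong refl) (simp add: exp_xt_def fps_lift_def monom_0[symmetric] mult_monom
      field_simps del: monom_0)

lemma pderiv_sum: "pderiv (sum f A) = (\<Sum>x\<in>A. pderiv (f x))"
  using higher_pderiv_sum[of 1 f A] by simp

lemma pderiv_exp_xt_mult_nth:
  "pderiv (fps_nth (exp_xt * fps_lift f) (Suc m)) = fps_nth (exp_xt * fps_lift f) m"
proof -
  have "pderiv (fps_nth (exp_xt * fps_lift f) (Suc m)) =
      (\<Sum>i\<le>Suc m. monom (fps_nth f (Suc m - i) / fact i * of_nat i) (i - 1))"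
    unfolding exp_xt_mult_nth pderiv_sum by (intro sum.cong refl) (simp add: pderiv_monom mult_ac)
  also have "\<dots> = (\<Sum>i\<le>m. monom (fps_nth f (m - i) / fact (Suc i) * of_nat (Suc i)) i)"
    by (subst sum.atMost_Suc_shift) simp
  also have "\<dots> = fps_nth (exp_xt * fps_lift f) m"
    by (simp add: exp_xt_mult_nth field_simps del: of_nat_Suc)
  finally show ?thesis .
qed

lemma poly_exp_xt_mult_nth_0: "poly (fps_nth (exp_xt * fps_lift f) m) 0 = fps_nth f m"
  by (simp add: exp_xt_mult_nth poly_sum poly_monom zero_power sum.delta if_distrib cong: if_cong)

lemma poly_eq_by_pderiv:
  fixes p q :: "'a::field_char_0 poly"
  assumes "pderiv p = pderiv q" "poly p 0 = poly q 0"
  shows "p = q"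
proof -
  have "degree (p - q) = 0"
    using assms(1) by (simp add: pderiv_diff pderiv_eq_0_iff[symmetric])
  then obtain a where "p - q = [:a:]"
    by (meson degree_eq_zeroE)
  moreover from this have "a = 0"
    using assms(2) by (metis poly_diff poly_pCons poly_0 mult_zero_left add.right_neutral right_minus_eq)
  ultimately show ?thesis by simp
qed

lemma appell_generating_function:
  assumes "appell A"
  shows "Abs_fps (appell_coeff A) = exp_xt * fps_lift (appell_f A)"
proof (rule fps_ext)
  fix m
  show "fps_nth (Abs_fps (appell_coeff A)) m = fps_nth (exp_xt * fps_lift (appell_f A)) m"
  proof (induction m)
    case 0
    then show ?case
      using assms by (simp add: exp_xt_def fps_lift_def appell_coeff_def appell_f_def appell_def)
  next
    case (Suc m)
    show ?case
    proof (rule poly_eq_by_pderiv)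
      show "pderiv (fps_nth (Abs_fps (appell_coeff A)) (Suc m)) = pderiv (fps_nth (exp_xt * fps_lift (appell_f A)) (Suc m))"
        using Suc appell_pderiv[OF assms, of "Suc m"]
        by (simp add: pderiv_exp_xt_mult_nth appell_coeff_def pderiv_smult field_simps del: of_nat_Suc)
      show "poly (fps_nth (Abs_fps (appell_coeff A)) (Suc m)) 0 = poly (fps_nth (exp_xt * fps_lift (appell_f A)) (Suc m)) 0"
        by (simp add: poly_exp_xt_mult_nth_0 appell_coeff_def appell_f_def field_simps)
    qed
  qed
qed

lemma fps_deriv_eq_fps_deriv_log_mult:
  fixes f :: "'a::field_char_0 fps"
  assumes f0: "fps_nth f 0 = 1"
  shows "fps_deriv f = fps_deriv (fps_log f) * f"
proof -
  have b0: "fps_nth (f - 1) 0 = 0" using f0 by simp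
  have "fps_deriv (fps_log f) = (fps_deriv (fps_ln 1) oo (f - 1)) * fps_deriv (f - 1)"
    unfolding fps_log_def by (rule fps_compose_deriv[OF b0])
  also have "fps_deriv (fps_ln (1::'a)) = inverse (1 + fps_X)"
    by (simp add: fps_ln_deriv)
  also have "inverse (1 + fps_X) oo (f - 1) = inverse ((1 + fps_X) oo (f - 1))"
    by (rule fps_inverse_compose[OF b0]) simp
  also have "(1 + fps_X) oo (f - 1) = f"
    using b0 by (simp add: fps_compose_add_distrib)
  finally have "fps_deriv (fps_log f) * f = fps_deriv f * (inverse f * f)"
    by (simp add: mult_ac)
  then show ?thesis using f0 by (simp add: inverse_mult_eq_1)
qed

lemma fps_deriv_appell_generating_function:
  assumes "appell A"
  shows "fps_deriv (Abs_fps (appell_coeff A)) =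
    (fps_const [:0, 1:] + fps_lift (fps_deriv (fps_log (appell_f A)))) * Abs_fps (appell_coeff A)"
proof -
  have "fps_nth (appell_f A) 0 = 1"
    using assms by (simp add: appell_f_def appell_def)
  then have "fps_deriv (fps_lift (appell_f A)) =
      fps_lift (fps_deriv (fps_log (appell_f A))) * fps_lift (appell_f A)"
    by (simp add: fps_lift_deriv[symmetric] fps_lift_mult[symmetric] fps_deriv_eq_fps_deriv_log_mult)
  then show ?thesis
    by (simp add: appell_generating_function[OF assms] fps_deriv_exp_xt algebra_simps)
qed

definition appell_power_sum :: "(nat \<Rightarrow> 'a::field_char_0) \<Rightarrow> nat \<Rightarrow> 'a poly" where
  "appell_power_sum c k = [:of_nat k * c k / fact k:] + (if k = 1 then [:0, 1:] else 0)"

text \<open>Comparing coefficients in \<open>H'/H = x + (log f\<^sub>A)'\<close>, where \<open>H = e\<^sup>x\<^sup>t f\<^sub>A(t)\<close>.\<close>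

lemma appell_power_sum_eq:
  assumes "appell A" and c: "\<forall>k\<ge>1. fps_nth (fps_log (appell_f A)) k = c k / fact k" and "1 \<le> k"
  shows "(\<Sum>d<k. of_nat (k - d) * inv_seq (appell_coeff A) d * appell_coeff A (k - d)) =
    appell_power_sum c k"
proof -
  define H where "H = Abs_fps (appell_coeff A)"
  define G where "G = Abs_fps (inv_seq (appell_coeff A))"
  define P where "P = fps_const [:0, 1:] + fps_lift (fps_deriv (fps_log (appell_f A)))"
  have "G * H = 1"
    by (rule fps_ext) (simp add: G_def H_def fps_mult_nth atLeast0AtMost
        inv_seq_convolution appell_coeff_0[OF assms(1)])
  moreover have "fps_deriv H = P * H"
    unfolding H_def P_def by (rule fps_deriv_appell_generating_function[OF assms(1)])
  ultimately have GH: "G * fps_deriv H = P"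
    by (metis mult.commute mult.left_commute mult_1_right)
  obtain k' where k': "k = Suc k'" using \<open>1 \<le> k\<close> by (cases k) auto
  have "fps_nth (G * fps_deriv H) k' = (\<Sum>d<k. of_nat (k - d) * inv_seq (appell_coeff A) d * appell_coeff A (k - d))"
    unfolding k' by (auto simp: fps_mult_nth G_def H_def atLeast0AtMost lessThan_Suc_atMost
        Suc_diff_le mult_ac intro!: sum.cong)
  moreover have "fps_nth P k' = appell_power_sum c k"
    using c k' by (simp add: P_def fps_lift_def appell_power_sum_def del: of_nat_Suc fact_Suc)
  ultimately show ?thesis using GH by simp
qed

section \<open>Vandermonde determinants\<close>

definition vdm :: "int list \<Rightarrow> int" where
  "vdm xs = (\<Prod>j<length xs. \<Prod>i<j. xs ! j - xs ! i)"

lemma vandermonde_eq_vdm: "vandermonde ns = vdm (map int ns)"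
  by (simp add: vandermonde_def vdm_def)

lemma vdm_Cons: "vdm (x # xs) = (\<Prod>j<length xs. xs ! j - x) * vdm xs"
proof -
  have "vdm (x # xs) = (\<Prod>j<length xs. \<Prod>i<Suc j. (x # xs) ! Suc j - (x # xs) ! i)"
    unfolding vdm_def length_Cons prod.lessThan_Suc_shift by simp
  also have "\<dots> = (\<Prod>j<length xs. (xs ! j - x) * (\<Prod>i<j. xs ! j - xs ! i))"
    by (intro prod.cong refl) (subst prod.lessThan_Suc_shift, simp)
  finally show ?thesis by (simp add: prod.distrib vdm_def)
qed

lemma vdm_eq_0_if_repeated:
  assumes "a < length xs" "b < length xs" "a \<noteq> b" "xs ! a = xs ! b"
  shows "vdm xs = 0"
proof -
  have zero: "vdm xs = 0" if "a < b" "b < length xs" "xs ! a = xs ! b" for a b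
  proof -
    have "\<exists>i\<in>{..<b}. xs ! b - xs ! i = 0"
      using that by (intro bexI[of _ a]) auto
    then have "(\<Prod>i<b. xs ! b - xs ! i) = 0"
      by (intro prod_zero) auto
    then have "\<exists>j\<in>{..<length xs}. (\<Prod>i<j. xs ! j - xs ! i) = 0"
      using that by auto
    then show ?thesis
      unfolding vdm_def by (intro prod_zero) auto
  qed
  show ?thesis
    using zero[of a b] zero[of b a] assms by (cases "a < b") auto
qed

lemma vdm_pos: "sorted_wrt (<) xs \<Longrightarrow> 0 < vdm xs"
  unfolding vdm_def by (auto intro!: prod_pos simp: sorted_wrt_iff_nth_less)

lemma vdm_upt: "vdm (map int [0..<r]) = (\<Prod>j<r. fact j)"
proof -
  have "(\<Prod>i<j. int j - int i) = fact j" for j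
  proof -
    have "(\<Prod>i<j. int j - int i) = int (\<Prod>i<j. j - i)"
      by (simp add: of_nat_diff)
    also have "(\<Prod>i<j. j - i) = (\<Prod>t\<in>{1..j}. t)"
      by (rule prod.reindex_bij_witness[where i="\<lambda>t. j - t" and j="\<lambda>i. j - i"]) auto
    finally show ?thesis by (simp add: fact_prod)
  qed
  then show ?thesis by (simp add: vdm_def)
qed

definition falling_fact :: "int \<Rightarrow> nat \<Rightarrow> int" where
  "falling_fact y i = (\<Prod>t<i. y - int t)"

lemma falling_fact_Suc: "falling_fact y (Suc i) = falling_fact y i * (y - int i)"
  by (simp add: falling_fact_def)

lemma falling_fact_Suc_shift: "falling_fact y (Suc i) = y * falling_fact (y - 1) i"
  unfolding falling_fact_def prod.lessThan_Suc_shift by (simp add: algebra_simps)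

definition falling_fact_matrix :: "int list \<Rightarrow> int mat" where
  "falling_fact_matrix xs = mat (length xs) (length xs) (\<lambda>(i, j). falling_fact (xs ! j) i)"

lemma falling_fact_matrix_carrier:
  "falling_fact_matrix xs \<in> carrier_mat (length xs) (length xs)"
  by (simp add: falling_fact_matrix_def)

text \<open>Subtracting \<open>(x - i + 1)\<close> times row \<open>i - 1\<close> from row \<open>i\<close>, i.e.\ multiplying by a unipotent
  lower bidiagonal matrix, clears the first column below the top entry.\<close>

lemma falling_fact_matrix_row_reduction:
  fixes x :: int and xs :: "int list"
  assumes L: "L = mat (Suc (length xs)) (Suc (length xs))
    (\<lambda>(i, i'). (if i' = i then 1 else 0) - (if Suc i' = i then x - int i' else 0))"
    and ij: "i < Suc (length xs)" "j < Suc (length xs)"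
  shows "(L * falling_fact_matrix (x # xs)) $$ (i, j) =
    (if i = 0 then 1 else ((x # xs) ! j - x) * falling_fact ((x # xs) ! j) (i - 1))"
proof -
  let ?M = "falling_fact_matrix (x # xs)"
  have "(L * ?M) $$ (i, j) = (\<Sum>i'<Suc (length xs). L $$ (i, i') * ?M $$ (i', j))"
    using ij by (simp add: L falling_fact_matrix_def times_mat_def scalar_prod_def lessThan_atLeast0)
  also have "\<dots> = (\<Sum>i'<Suc (length xs). (if i' = i then ?M $$ (i', j) else 0))
      - (\<Sum>i'<Suc (length xs). (if Suc i' = i then (x - int i') * ?M $$ (i', j) else 0))"
    unfolding sum_subtractf[symmetric] using ij by (intro sum.cong refl) (auto simp: L algebra_simps)
  also have "\<dots> = ?M $$ (i, j) - (if i = 0 then 0 else (x - int (i - 1)) * ?M $$ (i - 1, j))"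
    using ij by (cases i) (simp_all add: sum.delta sum.delta'[of _ "i - 1"] flip: Suc_eq_plus1)
  also have "\<dots> = (if i = 0 then 1 else ((x # xs) ! j - x) * falling_fact ((x # xs) ! j) (i - 1))"
    using ij by (cases i) (auto simp: falling_fact_matrix_def falling_fact_Suc falling_fact_def algebra_simps)
  finally show ?thesis .
qed

lemma det_falling_fact_matrix: "det (falling_fact_matrix xs) = vdm xs"
proof (induction xs)
  case Nil
  then show ?case by (simp add: falling_fact_matrix_def vdm_def)
next
  case (Cons x xs)
  let ?n = "Suc (length xs)"
  define L where "L = mat ?n ?n
    (\<lambda>(i, i'). (if i' = i then 1 else 0) - (if Suc i' = i then x - int i' else (0::int)))"
  let ?M = "falling_fact_matrix (x # xs)"
  have L: "L \<in> carrier_mat ?n ?n" and M: "?M \<in> carrier_mat ?n ?n"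
    by (simp_all add: L_def falling_fact_matrix_def)
  have LM: "L * ?M \<in> carrier_mat ?n ?n"
    using L M by simp
  have "det L = 1"
  proof -
    have "det L = prod_list (diag_mat L)"
      by (rule det_lower_triangular[OF _ L]) (auto simp: L_def)
    also have "diag_mat L = map (\<lambda>i. 1) [0..<?n]"
      unfolding diag_mat_def by (intro map_cong) (auto simp: L_def)
    finally show ?thesis by (simp add: map_replicate_const del: upt_Suc)
  qed
  then have "det ?M = det (L * ?M)"
    using det_mult[OF L M] by simp
  also have "\<dots> = (\<Sum>i<?n. (L * ?M) $$ (i, 0) * cofactor (L * ?M) i 0)"
    by (rule laplace_expansion_column[OF LM]) simp
  also have "\<dots> = (\<Sum>i<?n. if i = 0 then cofactor (L * ?M) 0 0 else 0)"
    by (intro sum.cong refl) (simp add: falling_fact_matrix_row_reduction[OF L_def])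
  also have "\<dots> = cofactor (L * ?M) 0 0"
    by simp
  also have "\<dots> = det (mat (length xs) (length xs) (\<lambda>(i, j). (xs ! j - x) * falling_fact (xs ! j) i))"
    unfolding cofactor_def power_0 add_0 mult_1
    by (intro arg_cong[of _ _ det] eq_matI)
      (use LM in \<open>auto simp: mat_delete_def falling_fact_matrix_row_reduction[OF L_def]
        simp del: index_mult_mat\<close>)
  also have "\<dots> = (\<Prod>j<length xs. xs ! j - x) * vdm xs"
    using Cons.IH by (simp add: det_mult_cols falling_fact_matrix_def)
  finally show ?case by (simp add: vdm_Cons)
qed

text \<open>The identity behind the corner recursion for the number of standard Young tableaux:
  \<open>x\<^sub>j\<close> times column \<open>j\<close> of the matrix for \<open>xs[j := x\<^sub>j - 1]\<close> is \<open>(x\<^sub>j - i)\<close> times column \<open>j\<close> of the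
  matrix for \<open>xs\<close>, and the two cofactor expansions of the determinant collapse the sum.\<close>

lemma sum_mult_vdm_decrement:
  "(\<Sum>j<length xs. xs ! j * vdm (xs[j := xs ! j - 1])) =
    ((\<Sum>j<length xs. xs ! j) - (\<Sum>i<length xs. int i)) * vdm xs"
proof -
  define r where "r = length xs"
  define M where "M = falling_fact_matrix xs"
  have M: "M \<in> carrier_mat r r"
    by (simp add: M_def r_def falling_fact_matrix_carrier)
  have summand: "xs ! j * vdm (xs[j := xs ! j - 1]) = (\<Sum>i<r. (xs ! j - int i) * (M $$ (i, j) * cofactor M i j))"
    if j: "j < r" for j
  proof -
    have "falling_fact_matrix (xs[j := xs ! j - 1]) =
        mat r r (\<lambda>(i, j'). if j' = j then falling_fact (xs ! j - 1) i else M $$ (i, j'))"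
      using j by (intro eq_matI) (auto simp: M_def r_def falling_fact_matrix_def nth_list_update)
    then have "vdm (xs[j := xs ! j - 1]) = (\<Sum>i<r. falling_fact (xs ! j - 1) i * cofactor M i j)"
      by (simp add: det_falling_fact_matrix[symmetric] det_replace_col[OF M j])
    moreover have "xs ! j * falling_fact (xs ! j - 1) i = (xs ! j - int i) * M $$ (i, j)" if "i < r" for i
      using that j by (simp add: falling_fact_Suc_shift[symmetric] falling_fact_Suc M_def r_def
          falling_fact_matrix_def)
    ultimately show ?thesis
      by (simp add: sum_distrib_left) (auto intro!: sum.cong simp flip: mult.assoc)
  qed
  have col: "(\<Sum>i<r. M $$ (i, j) * cofactor M i j) = det M" if "j < r" for j
    using laplace_expansion_column[OF M that] by simp
  have row: "(\<Sum>j<r. M $$ (i, j) * cofactor M i j) = det M" if "i < r" for i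
    using sum_row_mult_cofactor[OF M that that] by simp
  have "(\<Sum>j<r. xs ! j * vdm (xs[j := xs ! j - 1])) =
      (\<Sum>j<r. xs ! j * (\<Sum>i<r. M $$ (i, j) * cofactor M i j))
      - (\<Sum>j<r. \<Sum>i<r. int i * (M $$ (i, j) * cofactor M i j))"
    by (simp add: summand left_diff_distrib sum_subtractf sum_distrib_left)
  also have "(\<Sum>j<r. \<Sum>i<r. int i * (M $$ (i, j) * cofactor M i j)) =
      (\<Sum>i<r. int i * (\<Sum>j<r. M $$ (i, j) * cofactor M i j))"
    by (subst sum.swap) (simp add: sum_distrib_left)
  also have "(\<Sum>j<r. xs ! j * (\<Sum>i<r. M $$ (i, j) * cofactor M i j))
      - (\<Sum>i<r. int i * (\<Sum>j<r. M $$ (i, j) * cofactor M i j)) =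
      (\<Sum>j<r. xs ! j * det M) - (\<Sum>i<r. int i * det M)"
    by (simp add: col row)
  finally show ?thesis
    by (simp add: r_def M_def det_falling_fact_matrix left_diff_distrib sum_distrib_right)
qed

section \<open>Counting standard Young tableaux\<close>

definition row_len :: "nat list \<Rightarrow> nat \<Rightarrow> nat" where
  "row_len la i = (if i < length la then la ! i else 0)"

lemma diagram_row_len: "diagram la = {(i, j). j < row_len la i}"
  by (auto simp: diagram_def row_len_def split: if_splits)

lemma diagram_eq_Sigma: "diagram la = (SIGMA i:{..<length la}. {..<la ! i})"
  by (auto simp: diagram_def)

lemma psize_eq_sum: "psize la = (\<Sum>i<length la. la ! i)"
  by (simp add: psize_def sum_list_sum_nth atLeast0LessThan)

lemma finite_diagram: "finite (diagram la)"
  by (simp add: diagram_eq_Sigma)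

lemma card_diagram: "card (diagram la) = psize la"
  by (simp add: diagram_eq_Sigma psize_eq_sum)

lemma length_shifted_parts [simp]: "length (shifted_parts la) = length la"
  by (simp add: shifted_parts_def)

lemma nth_shifted_parts: "j < length la \<Longrightarrow> shifted_parts la ! j = la ! (length la - 1 - j) + j"
  by (simp add: shifted_parts_def)

lemma sorted_wrt_ge_nth:
  fixes la :: "'a::linorder list"
  assumes "sorted_wrt (\<ge>) la" "i \<le> i'" "i' < length la"
  shows "la ! i' \<le> la ! i"
  using assms sorted_wrt_nth_less[OF assms(1), of i i'] by (cases "i = i'") auto

lemma sorted_shifted_parts:
  assumes "sorted_wrt (\<ge>) la"
  shows "sorted_wrt (<) (shifted_parts la)"
proof -
  have "la ! (length la - 1 - j) \<le> la ! (length la - 1 - j')" if "j < j'" "j' < length la" for j j'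
    using that by (intro sorted_wrt_ge_nth[OF assms]) auto
  then show ?thesis
    by (auto simp: sorted_wrt_iff_nth_less nth_shifted_parts intro!: add_le_less_mono)
qed

definition syt_on :: "(nat \<times> nat) set \<Rightarrow> nat \<Rightarrow> ((nat \<times> nat) \<Rightarrow> nat) set" where
  "syt_on D n = {T. bij_betw T D {1..n} \<and> (\<forall>c. c \<notin> D \<longrightarrow> T c = 0) \<and>
     (\<forall>i j. (i, Suc j) \<in> D \<longrightarrow> T (i, j) < T (i, Suc j)) \<and>
     (\<forall>i j. (Suc i, j) \<in> D \<longrightarrow> T (i, j) < T (Suc i, j))}"

lemma SYT_eq_syt_on: "SYT la = syt_on (diagram la) (psize la)"
  by (simp add: SYT_def syt_on_def)

definition corners :: "(nat \<times> nat) set \<Rightarrow> (nat \<times> nat) set" where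
  "corners D = {c \<in> D. (fst c, Suc (snd c)) \<notin> D \<and> (Suc (fst c), snd c) \<notin> D}"

lemma syt_on_outside: "T \<in> syt_on D n \<Longrightarrow> x \<notin> D \<Longrightarrow> T x = 0"
  unfolding syt_on_def by blast

lemma syt_on_le: "T \<in> syt_on D n \<Longrightarrow> T x \<le> n"
  using syt_on_outside[of T D n x] by (cases "x \<in> D") (auto simp: syt_on_def bij_betw_def)

lemma finite_syt_on: "finite D \<Longrightarrow> finite (syt_on D n)"
proof -
  assume D: "finite D"
  have "syt_on D n \<subseteq> {f. \<forall>x. (x \<in> D \<longrightarrow> f x \<in> {0..n}) \<and> (x \<notin> D \<longrightarrow> f x = 0)}"
    by (auto simp: syt_on_def bij_betw_def)
  then show ?thesis
    using finite_set_of_finite_funs[OF D, of "{0..n}" 0] finite_subset by blast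
qed

lemma syt_on_max_in_corners:
  assumes T: "T \<in> syt_on D n" and c: "c \<in> D" "T c = n"
  shows "c \<in> corners D"
proof -
  obtain i j where [simp]: "c = (i, j)"
    by (cases c)
  have "\<not> T (i, j) < T x" for x
    using c syt_on_le[OF T, of x] by simp
  moreover have "T (i, j) < T (i, Suc j)" if "(i, Suc j) \<in> D"
    using that T by (simp add: syt_on_def)
  moreover have "T (i, j) < T (Suc i, j)" if "(Suc i, j) \<in> D"
    using that T by (simp add: syt_on_def)
  ultimately have "(i, Suc j) \<notin> D" "(Suc i, j) \<notin> D"
    by blast+
  then show ?thesis
    using c by (simp add: corners_def)
qed

lemma syt_on_remove_max:
  assumes T: "T \<in> syt_on D n" and c: "c \<in> D" "T c = n" and n: "1 \<le> n"
  shows "T(c := 0) \<in> syt_on (D - {c}) (n - 1)"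
  unfolding syt_on_def
proof (intro CollectI conjI allI impI)
  have bij: "bij_betw T D {1..n}"
    using T by (simp add: syt_on_def)
  then have "T ` (D - {c}) = {1..n} - {n}"
    using c by (subst inj_on_image_set_diff[of T D]) (auto simp: bij_betw_def)
  also have "\<dots> = {1..n - 1}"
    using n by auto
  finally have "bij_betw T (D - {c}) {1..n - 1}"
    using bij by (auto simp: bij_betw_def intro: inj_on_subset)
  then show "bij_betw (T(c := 0)) (D - {c}) {1..n - 1}"
    by (rule bij_betw_cong[THEN iffD1, rotated]) auto
  have not_c: "(i, j) \<noteq> c" if "T (i, j) < T x" for i j x
    using that c syt_on_le[OF T, of x] by auto
  show "(T(c := 0)) (i, j) < (T(c := 0)) (i, Suc j)" if "(i, Suc j) \<in> D - {c}" for i j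
  proof -
    have "T (i, j) < T (i, Suc j)"
      using that T by (simp add: syt_on_def)
    then show ?thesis using that not_c by simp
  qed
  show "(T(c := 0)) (i, j) < (T(c := 0)) (Suc i, j)" if "(Suc i, j) \<in> D - {c}" for i j
  proof -
    have "T (i, j) < T (Suc i, j)"
      using that T by (simp add: syt_on_def)
    then show ?thesis using that not_c by simp
  qed
qed (use T in \<open>auto simp: syt_on_outside\<close>)

lemma syt_on_add_corner:
  assumes T: "T \<in> syt_on (D - {c}) (n - 1)" and c: "c \<in> corners D" and n: "1 \<le> n"
  shows "T(c := n) \<in> syt_on D n"
  unfolding syt_on_def
proof (intro CollectI conjI allI impI)
  have bij: "bij_betw T (D - {c}) {1..n - 1}"
    using T by (simp add: syt_on_def)
  then have im: "T(c := n) ` (D - {c}) = {1..n - 1}" and inj: "inj_on (T(c := n)) (D - {c})"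
    by (auto simp: bij_betw_def inj_on_def)
  have "inj_on (T(c := n)) (insert c (D - {c}))"
    unfolding inj_on_insert using inj im n by auto
  moreover have "T(c := n) ` insert c (D - {c}) = {1..n}"
    unfolding image_insert fun_upd_same im using n by auto
  moreover have "insert c (D - {c}) = D"
    using c by (auto simp: corners_def)
  ultimately show "bij_betw (T(c := n)) D {1..n}"
    by (metis bij_betw_def)
  have lt: "T x < n" for x
    using syt_on_le[OF T, of x] n by simp
  show "(T(c := n)) (i, j) < (T(c := n)) (i, Suc j)" if "(i, Suc j) \<in> D" for i j
    using that c T lt by (cases "(i, Suc j) = c") (auto simp: corners_def syt_on_def)
  show "(T(c := n)) (i, j) < (T(c := n)) (Suc i, j)" if "(Suc i, j) \<in> D" for i j
    using that c T lt by (cases "(Suc i, j) = c") (auto simp: corners_def syt_on_def)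
qed (use T c in \<open>auto simp: syt_on_outside corners_def\<close>)

lemma syt_on_with_max_at:
  assumes "c \<in> corners D" "1 \<le> n"
  shows "{T \<in> syt_on D n. T c = n} = (\<lambda>T. T(c := n)) ` syt_on (D - {c}) (n - 1)"
proof (intro equalityI subsetI)
  fix T assume T: "T \<in> {T \<in> syt_on D n. T c = n}"
  have "c \<in> D"
    using assms by (simp add: corners_def)
  then have "T(c := 0) \<in> syt_on (D - {c}) (n - 1)"
    using T assms by (intro syt_on_remove_max) auto
  moreover have "T = (T(c := 0))(c := n)"
    using T by auto
  ultimately show "T \<in> (\<lambda>T. T(c := n)) ` syt_on (D - {c}) (n - 1)"
    by blast
qed (auto intro: syt_on_add_corner[OF _ assms])

lemma card_syt_on:
  assumes D: "finite D" and n: "1 \<le> n"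
  shows "card (syt_on D n) = (\<Sum>c\<in>corners D. card (syt_on (D - {c}) (n - 1)))"
proof -
  have "syt_on D n = (\<Union>c\<in>corners D. {T \<in> syt_on D n. T c = n})"
  proof (intro equalityI subsetI)
    fix T assume T: "T \<in> syt_on D n"
    then have "n \<in> T ` D"
      using n by (auto simp: syt_on_def bij_betw_def)
    then show "T \<in> (\<Union>c\<in>corners D. {T \<in> syt_on D n. T c = n})"
      using T syt_on_max_in_corners by blast
  qed auto
  moreover have "card (\<Union>c\<in>corners D. {T \<in> syt_on D n. T c = n}) =
      (\<Sum>c\<in>corners D. card {T \<in> syt_on D n. T c = n})"
  proof (rule card_UN_disjoint)
    show "finite (corners D)"
      using D by (rule finite_subset[rotated]) (auto simp: corners_def)
    show "\<forall>c\<in>corners D. finite {T \<in> syt_on D n. T c = n}"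
      using finite_syt_on[OF D] by auto
    have "c = c'" if "T \<in> syt_on D n" "c \<in> corners D" "c' \<in> corners D" "T c = T c'" for T c c'
      using that by (auto simp: syt_on_def bij_betw_def corners_def dest: inj_onD)
    then show "\<forall>c\<in>corners D. \<forall>c'\<in>corners D. c \<noteq> c' \<longrightarrow>
        {T \<in> syt_on D n. T c = n} \<inter> {T \<in> syt_on D n. T c' = n} = {}"
      by force
  qed
  ultimately have "card (syt_on D n) = (\<Sum>c\<in>corners D. card {T \<in> syt_on D n. T c = n})"
    by simp
  also have "\<dots> = (\<Sum>c\<in>corners D. card (syt_on (D - {c}) (n - 1)))"
  proof (intro sum.cong refl)
    fix c assume c: "c \<in> corners D"
    have "inj_on (\<lambda>T. T(c := n)) (syt_on (D - {c}) (n - 1))"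
      by (rule inj_onI) (metis fun_upd_triv fun_upd_upd syt_on_outside Diff_iff singletonI)
    then show "card {T \<in> syt_on D n. T c = n} = card (syt_on (D - {c}) (n - 1))"
      by (simp add: syt_on_with_max_at[OF c n] card_image)
  qed
  finally show ?thesis .
qed

definition corner_rows :: "nat list \<Rightarrow> nat set" where
  "corner_rows la = {R. R < length la \<and> row_len la (Suc R) < la ! R}"

lemma corners_diagram: "corners (diagram la) = (\<lambda>R. (R, la ! R - 1)) ` corner_rows la"
proof (intro equalityI subsetI)
  fix c assume c: "c \<in> corners (diagram la)"
  obtain i j where [simp]: "c = (i, j)"
    by (cases c)
  have "j < row_len la i" "\<not> Suc j < row_len la i" "\<not> j < row_len la (Suc i)"
    using c by (auto simp: corners_def diagram_row_len)
  then have "i \<in> corner_rows la" "j = la ! i - 1"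
    by (auto simp: corner_rows_def row_len_def split: if_splits)
  then show "c \<in> (\<lambda>R. (R, la ! R - 1)) ` corner_rows la"
    by simp
qed (auto simp: corners_def diagram_row_len row_len_def corner_rows_def)

context
  fixes la :: "nat list" and R :: nat
  assumes sorted: "sorted_wrt (\<ge>) la" and corner: "R \<in> corner_rows la"
begin

lemma corner_row_pos: "R < length la" "1 \<le> la ! R"
  using corner by (auto simp: corner_rows_def)

lemma diagram_remove_corner: "diagram (la[R := la ! R - 1]) = diagram la - {(R, la ! R - 1)}"
  using corner_row_pos by (auto simp: diagram_def nth_list_update split: if_splits)

lemma psize_remove_corner: "Suc (psize (la[R := la ! R - 1])) = psize la"
proof -
  have "la = take R la @ la ! R # drop (Suc R) la"
    using corner_row_pos by (simp add: id_take_nth_drop)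
  then have "psize la = sum_list (take R la) + (la ! R + sum_list (drop (Suc R) la))"
    unfolding psize_def by (metis sum_list_append sum_list.Cons)
  moreover have "psize (la[R := la ! R - 1]) = sum_list (take R la) + (la ! R - 1 + sum_list (drop (Suc R) la))"
    using corner_row_pos by (simp add: psize_def upd_conv_take_nth_drop)
  ultimately show ?thesis
    using corner_row_pos by simp
qed

lemma sorted_remove_corner: "sorted_wrt (\<ge>) (la[R := la ! R - 1])"
  unfolding sorted_wrt_iff_nth_less
proof (intro allI impI)
  fix i j assume ij: "i < j" "j < length (la[R := la ! R - 1])"
  have "la ! j \<le> la ! i"
    using ij by (intro sorted_wrt_ge_nth[OF sorted]) auto
  moreover have "la ! j < la ! R" if "i = R"
    using ij that corner sorted_wrt_ge_nth[OF sorted, of "Suc R" j]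
    by (auto simp: corner_rows_def row_len_def split: if_splits)
  ultimately show "la[R := la ! R - 1] ! j \<le> la[R := la ! R - 1] ! i"
    using ij by (cases "i = R"; cases "j = R") (auto simp: nth_list_update)
qed

lemma shifted_parts_remove_corner:
  "shifted_parts (la[R := la ! R - 1]) =
    (shifted_parts la)[length la - 1 - R := shifted_parts la ! (length la - 1 - R) - 1]"
  using corner_row_pos
  by (intro nth_equalityI) (auto simp: nth_shifted_parts nth_list_update)

end

lemma num_SYT_corner_recursion:
  assumes sorted: "sorted_wrt (\<ge>) la" and pos: "0 < psize la"
  shows "F la = (\<Sum>R\<in>corner_rows la. F (la[R := la ! R - 1]))"
proof -
  have "F la = (\<Sum>c\<in>corners (diagram la). card (syt_on (diagram la - {c}) (psize la - 1)))"
    using pos by (simp add: num_SYT_def SYT_eq_syt_on card_syt_on finite_diagram)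
  also have "\<dots> = (\<Sum>R\<in>corner_rows la. card (syt_on (diagram la - {(R, la ! R - 1)}) (psize la - 1)))"
    unfolding corners_diagram by (subst sum.reindex) (auto simp: inj_on_def)
  also have "\<dots> = (\<Sum>R\<in>corner_rows la. F (la[R := la ! R - 1]))"
  proof (intro sum.cong refl)
    fix R assume R: "R \<in> corner_rows la"
    have "psize (la[R := la ! R - 1]) = psize la - 1"
      using psize_remove_corner[OF sorted R] by simp
    then show "card (syt_on (diagram la - {(R, la ! R - 1)}) (psize la - 1)) = F (la[R := la ! R - 1])"
      unfolding num_SYT_def SYT_eq_syt_on diagram_remove_corner[OF sorted R] by simp
  qed
  finally show ?thesis .
qed

lemma prod_fact_decrement:
  assumes j: "j < length s" "1 \<le> s ! j"
  shows "(\<Prod>i<length s. fact (s ! i) :: int) = int (s ! j) * (\<Prod>i<length s. fact (s[j := s ! j - 1] ! i))"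
proof -
  have "(\<Prod>i\<in>{..<length s} - {j}. fact (s[j := s ! j - 1] ! i) :: int) =
      (\<Prod>i\<in>{..<length s} - {j}. fact (s ! i))"
    by (intro prod.cong) auto
  then have "(\<Prod>i<length s. fact (s[j := s ! j - 1] ! i) :: int) =
      fact (s ! j - 1) * (\<Prod>i\<in>{..<length s} - {j}. fact (s ! i))"
    using j by (simp add: prod.remove[of _ j])
  moreover have "(\<Prod>i<length s. fact (s ! i) :: int) = fact (s ! j) * (\<Prod>i\<in>{..<length s} - {j}. fact (s ! i))"
    using j by (simp add: prod.remove[of _ j])
  moreover have "(fact (s ! j) :: int) = int (s ! j) * fact (s ! j - 1)"
    using j by (simp add: fact_reduce)
  ultimately show ?thesis by simp
qed

lemma vdm_decrement_shifted_parts_eq_0: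
  assumes sorted: "sorted_wrt (\<ge>) la" and j: "j < length la"
    and not_corner: "length la - 1 - j \<notin> corner_rows la"
  shows "int (shifted_parts la ! j) * vdm (map int ((shifted_parts la)[j := shifted_parts la ! j - 1])) = 0"
proof -
  define s where "s = shifted_parts la"
  have "int (s ! j) * vdm (map int (s[j := s ! j - 1])) = 0"
  proof (cases "j = 0")
    case True
    with not_corner j have "la ! (length la - 1) = 0"
      by (auto simp: corner_rows_def row_len_def)
    then show ?thesis using True j by (simp add: s_def nth_shifted_parts)
  next
    case False
    define R where "R = length la - 1 - j"
    have R: "Suc R < length la" "j = length la - 1 - R"
      using False j by (auto simp: R_def)
    have "la ! Suc R \<le> la ! R"
      using R by (intro sorted_wrt_ge_nth[OF sorted]) auto
    with not_corner R have "la ! Suc R = la ! R"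
      by (auto simp: corner_rows_def row_len_def)
    then have "s ! (j - 1) = s ! j - 1" "1 \<le> s ! j"
      using False R j by (auto simp: s_def nth_shifted_parts Suc_diff_Suc)
    then have "vdm (map int (s[j := s ! j - 1])) = 0"
      using False j by (intro vdm_eq_0_if_repeated[of "j - 1" _ j]) (auto simp: s_def nth_list_update)
    then show ?thesis by simp
  qed
  then show ?thesis by (simp add: s_def)
qed

lemma sum_corner_rows_vdm:
  assumes sorted: "sorted_wrt (\<ge>) la"
  shows "(\<Sum>R\<in>corner_rows la. let j = length la - 1 - R in
      int (shifted_parts la ! j) * vdm (map int ((shifted_parts la)[j := shifted_parts la ! j - 1]))) =
    int (psize la) * vdm (map int (shifted_parts la))"
proof -
  define s where "s = shifted_parts la"
  define r where "r = length la"
  define g where "g j = int (s ! j) * vdm (map int (s[j := s ! j - 1]))" for j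
  have "(\<Sum>R\<in>corner_rows la. g (r - 1 - R)) = (\<Sum>j\<in>(\<lambda>R. r - 1 - R) ` corner_rows la. g j)"
    by (subst sum.reindex) (auto simp: inj_on_def corner_rows_def r_def)
  also have "\<dots> = (\<Sum>j<r. g j)"
  proof (rule sum.mono_neutral_left)
    show "\<forall>j\<in>{..<r} - (\<lambda>R. r - 1 - R) ` corner_rows la. g j = 0"
    proof
      fix j assume j: "j \<in> {..<r} - (\<lambda>R. r - 1 - R) ` corner_rows la"
      then have "r - 1 - j \<notin> corner_rows la"
        using image_eqI[of j "\<lambda>R. r - 1 - R" "r - 1 - j"] by auto
      then show "g j = 0"
        using vdm_decrement_shifted_parts_eq_0[OF sorted, of j] j by (simp add: g_def s_def r_def)
    qed
  qed (auto simp: corner_rows_def r_def)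
  also have "\<dots> = (\<Sum>j<r. int (s ! j) * vdm ((map int s)[j := int (s ! j) - 1]))"
  proof (intro sum.cong refl)
    fix j
    show "g j = int (s ! j) * vdm ((map int s)[j := int (s ! j) - 1])"
      by (cases "s ! j = 0") (simp_all add: g_def map_update of_nat_diff)
  qed
  also have "\<dots> = ((\<Sum>j<r. int (s ! j)) - (\<Sum>i<r. int i)) * vdm (map int s)"
    using sum_mult_vdm_decrement[of "map int s"] by (simp add: s_def r_def)
  also have "(\<Sum>j<r. int (s ! j)) - (\<Sum>i<r. int i) = int (psize la)"
  proof -
    have "(\<Sum>j<r. int (s ! j)) = (\<Sum>j<r. int (la ! (r - 1 - j))) + (\<Sum>i<r. int i)"
      by (simp add: s_def r_def nth_shifted_parts sum.distrib)
    moreover have "(\<Sum>j<r. int (la ! (r - 1 - j))) = int (psize la)"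
      using sum.nat_diff_reindex[of "\<lambda>j. int (la ! j)" r] by (simp add: r_def psize_eq_sum)
    ultimately show ?thesis by simp
  qed
  finally show ?thesis by (simp add: g_def s_def r_def Let_def)
qed

lemma num_SYT_psize_0:
  assumes "psize la = 0"
  shows "F la = 1" "shifted_parts la = [0..<length la]"
proof -
  have "diagram la = {}"
    using assms by (auto simp: diagram_def psize_eq_sum)
  moreover have "syt_on {} 0 = {\<lambda>_. 0}"
    by (auto simp: syt_on_def bij_betw_def)
  ultimately show "F la = 1"
    using assms by (simp add: num_SYT_def SYT_eq_syt_on)
  show "shifted_parts la = [0..<length la]"
    using assms by (auto simp: psize_eq_sum nth_shifted_parts intro!: nth_equalityI)
qed

text \<open>Frobenius' formula \<open>F\<^sub>\<lambda> = |\<lambda>|! \<Delta>(n) / \<Prod> n\<^sub>j!\<close>. Zero parts are allowed, since removing a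
  corner may create one.\<close>

theorem num_SYT_mult_prod_fact:
  assumes "sorted_wrt (\<ge>) la"
  shows "int (F la) * (\<Prod>j<length la. fact (shifted_parts la ! j)) =
    fact (psize la) * vdm (map int (shifted_parts la))"
  using assms
proof (induction "psize la" arbitrary: la)
  case 0
  then show ?case
    using num_SYT_psize_0[of la] by (simp add: vdm_upt)
next
  case (Suc N)
  define s where "s = shifted_parts la"
  define r where "r = length la"
  let ?P = "\<lambda>s. (\<Prod>i<length s. fact (s ! i) :: int)"
  have step: "int (F (la[R := la ! R - 1])) * ?P s =
      int (s ! (r - 1 - R)) * (fact N * vdm (map int (s[r - 1 - R := s ! (r - 1 - R) - 1])))"
    if R: "R \<in> corner_rows la" for R
  proof -
    have pos: "1 \<le> s ! (r - 1 - R)"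
      using corner_row_pos[OF Suc.prems R] by (simp add: s_def r_def nth_shifted_parts)
    have IH: "int (F (la[R := la ! R - 1])) * ?P (s[r - 1 - R := s ! (r - 1 - R) - 1]) =
        fact N * vdm (map int (s[r - 1 - R := s ! (r - 1 - R) - 1]))"
    proof -
      have "N = psize (la[R := la ! R - 1])"
        using Suc.hyps(2) psize_remove_corner[OF Suc.prems R] by simp
      from Suc.hyps(1)[OF this sorted_remove_corner[OF Suc.prems R]] this show ?thesis
        unfolding shifted_parts_remove_corner[OF Suc.prems R] by (simp add: s_def r_def)
    qed
    have "?P s = int (s ! (r - 1 - R)) * (\<Prod>i<length s. fact (s[r - 1 - R := s ! (r - 1 - R) - 1] ! i))"
      by (rule prod_fact_decrement) (use pos corner_row_pos[OF Suc.prems R] in \<open>simp_all add: s_def r_def\<close>)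
    then show ?thesis
      using IH by (simp add: mult_ac)
  qed
  have "int (F la) * ?P s = (\<Sum>R\<in>corner_rows la. int (F (la[R := la ! R - 1])) * ?P s)"
    using Suc.hyps(2) Suc.prems by (simp add: num_SYT_corner_recursion sum_distrib_right)
  also have "\<dots> = (\<Sum>R\<in>corner_rows la.
      int (s ! (r - 1 - R)) * (fact N * vdm (map int (s[r - 1 - R := s ! (r - 1 - R) - 1]))))"
    by (rule sum.cong[OF refl step])
  also have "\<dots> = fact N * (\<Sum>R\<in>corner_rows la.
      int (s ! (r - 1 - R)) * vdm (map int (s[r - 1 - R := s ! (r - 1 - R) - 1])))"
    by (simp add: sum_distrib_left mult_ac)
  also have "\<dots> = fact N * int (Suc N) * vdm (map int s)"
    using sum_corner_rows_vdm[OF Suc.prems] Suc.hyps(2) by (simp add: s_def r_def Let_def)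
  finally show ?case
    by (simp add: s_def algebra_simps flip: Suc.hyps(2))
qed

lemma num_SYT_appell_schur:
  assumes "appell A" and sorted: "sorted_wrt (\<ge>) la"
  shows "smult (of_nat (F la)) (appell_schur A la) =
    smult (fact (psize la)) (jacobi_trudi (appell_coeff A) (shifted_parts la))"
proof -
  let ?s = "shifted_parts la"
  let ?P = "\<Prod>j<length la. fact (?s ! j) :: nat"
  let ?V = "vdm (map int ?s)"
  have V: "?V \<noteq> 0"
    using vdm_pos[of "map int ?s"] sorted_shifted_parts[OF sorted]
    by (simp add: sorted_wrt_map)
  have "(of_nat (F la) * of_nat ?P :: 'a) = of_int (int (F la) * int ?P)"
    by simp
  also have "\<dots> = fact (psize la) * of_int ?V"
    using num_SYT_mult_prod_fact[OF sorted] by (simp add: of_nat_prod)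
  finally have FPV: "(of_nat (F la) * of_nat ?P / of_int ?V :: 'a) = fact (psize la)"
    using V by (simp add: field_simps)
  have "smult (of_nat (F la)) (appell_schur A la) =
      smult (of_nat (F la) / of_int ?V) (of_nat ?P * jacobi_trudi (appell_coeff A) ?s)"
    by (simp add: appell_schur_def wronskian_appell[OF assms(1)] vandermonde_eq_vdm)
  also have "of_nat ?P * jacobi_trudi (appell_coeff A) ?s = smult (of_nat ?P) (jacobi_trudi (appell_coeff A) ?s)"
    by (rule of_nat_mult_conv_smult)
  finally show ?thesis
    using FPV by (simp add: field_simps)
qed

section \<open>Rim hooks\<close>

definition skew_cells :: "(nat \<Rightarrow> nat) \<Rightarrow> (nat \<Rightarrow> nat) \<Rightarrow> (nat \<times> nat) set" where
  "skew_cells l g = {(i, j). l i \<le> j \<and> j < g i}"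

lemma skew_eq_skew_cells: "skew ga la = skew_cells (row_len la) (row_len ga)"
  by (auto simp: skew_def skew_cells_def diagram_row_len)

lemma no_2x2_skew_cells_iff:
  assumes antg: "\<And>i. g (Suc i) \<le> g i" and antl: "\<And>i. l (Suc i) \<le> l i"
  shows "no_2x2 (skew_cells l g) \<longleftrightarrow> (\<forall>i. g (Suc i) \<le> Suc (l i))"
proof
  assume no_2x2: "no_2x2 (skew_cells l g)"
  show "\<forall>i. g (Suc i) \<le> Suc (l i)"
  proof (rule ccontr)
    assume "\<not> (\<forall>i. g (Suc i) \<le> Suc (l i))"
    then obtain i where "Suc (Suc (l i)) \<le> g (Suc i)"
      by (auto simp: not_le Suc_le_eq)
    then have "{(i, l i), (Suc i, l i), (i, Suc (l i)), (Suc i, Suc (l i))} \<subseteq> skew_cells l g"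
      using antg[of i] antl[of i] by (auto simp: skew_cells_def)
    then show False
      using no_2x2 by (auto simp: no_2x2_def)
  qed
next
  assume narrow: "\<forall>i. g (Suc i) \<le> Suc (l i)"
  show "no_2x2 (skew_cells l g)"
    unfolding no_2x2_def
  proof
    assume "\<exists>i j. {(i, j), (Suc i, j), (i, Suc j), (Suc i, Suc j)} \<subseteq> skew_cells l g"
    then obtain i j where "l i \<le> j" "Suc j < g (Suc i)"
      by (auto simp: skew_cells_def)
    then show False
      using narrow[rule_format, of i] by simp
  qed
qed

abbreviation adj_in :: "(nat \<times> nat) set \<Rightarrow> nat \<times> nat \<Rightarrow> nat \<times> nat \<Rightarrow> bool" where
  "adj_in S \<equiv> (\<lambda>x y. x \<in> S \<and> y \<in> S \<and> adjacent x y)"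

lemma adj_in_rtranclp_sym: "(adj_in S)\<^sup>*\<^sup>* x y \<Longrightarrow> (adj_in S)\<^sup>*\<^sup>* y x"
proof (induction rule: rtranclp_induct)
  case (step y z)
  then have "adj_in S z y"
    by (auto simp: adjacent_def)
  then show ?case
    using step(3) by (rule converse_rtranclp_into_rtranclp)
qed simp

lemma adj_in_rtranclp_invariant:
  assumes "(adj_in S)\<^sup>*\<^sup>* x y" "P x"
    and "\<And>u v. u \<in> S \<Longrightarrow> v \<in> S \<Longrightarrow> adjacent u v \<Longrightarrow> P u \<Longrightarrow> P v"
  shows "P y"
  using assms(1,2) by (induction rule: rtranclp_induct) (use assms(3) in blast)+

lemma adj_in_skew_cells_along_row:
  assumes "l i \<le> j" "j < g i"
  shows "(adj_in (skew_cells l g))\<^sup>*\<^sup>* (i, j) (i, l i)"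
  using assms
proof (induction j)
  case (Suc j)
  show ?case
  proof (cases "l i \<le> j")
    case True
    then have "adj_in (skew_cells l g) (i, Suc j) (i, j)"
      using Suc.prems by (auto simp: skew_cells_def adjacent_def)
    then show ?thesis
      using Suc True by (auto intro: converse_rtranclp_into_rtranclp)
  qed (use Suc.prems in \<open>simp add: le_Suc_eq\<close>)
qed simp

text \<open>The rows \<open>a..b\<close> of the skew shape between row-length functions are exactly the nonempty ones,
  and consecutive ones overlap in a single column: the shape of a rim hook.\<close>

definition hook_rows :: "(nat \<Rightarrow> nat) \<Rightarrow> (nat \<Rightarrow> nat) \<Rightarrow> nat \<Rightarrow> nat \<Rightarrow> bool" where
  "hook_rows l g a b \<longleftrightarrow> a \<le> b \<and> (\<forall>i. l i < g i \<longleftrightarrow> a \<le> i \<and> i \<le> b) \<and>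
     (\<forall>i. a \<le> i \<longrightarrow> i < b \<longrightarrow> g (Suc i) = Suc (l i))"

lemma fst_skew_cells:
  "hook_rows l g a b \<Longrightarrow> fst ` skew_cells l g = {a..b}"
  by (force simp: hook_rows_def skew_cells_def image_iff)

text \<open>A path of adjacent cells from row \<open>i\<^sub>1\<close> to row \<open>i\<^sub>2\<close> has to cross from row \<open>i\<close> to row \<open>i + 1\<close>.\<close>

lemma connected_skew_cells_overlap:
  assumes conn: "cell_connected (skew_cells l g)"
    and i1: "l i1 < g i1" "i1 \<le> i" and i2: "l i2 < g i2" "i < i2"
  shows "l i < g (Suc i)"
proof (rule ccontr)
  assume "\<not> l i < g (Suc i)"
  then have gap: "g (Suc i) \<le> l i" by simp
  have "(adj_in (skew_cells l g))\<^sup>*\<^sup>* (i1, l i1) (i2, l i2)"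
    using conn i1 i2 by (auto simp: cell_connected_def skew_cells_def)
  then have "fst (i2, l i2) \<le> i"
  proof (rule adj_in_rtranclp_invariant)
    fix u v assume u: "u \<in> skew_cells l g" and v: "v \<in> skew_cells l g"
      and adj: "adjacent u v" and "fst u \<le> i"
    show "fst v \<le> i"
    proof (rule ccontr)
      assume "\<not> fst v \<le> i"
      then have "fst v = Suc i" "fst u = i" "snd u = snd v"
        using adj \<open>fst u \<le> i\<close> by (auto simp: adjacent_def)
      then show False
        using u v gap by (cases u, cases v) (auto simp: skew_cells_def)
    qed
  qed (use i1 in simp)
  then show False using i2 by simp
qed

lemma hook_rows_if_connected_no_2x2:
  assumes antg: "\<And>i. g (Suc i) \<le> g i" and antl: "\<And>i. l (Suc i) \<le> l i"
    and fin: "\<And>i. M \<le> i \<Longrightarrow> g i = 0"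
    and conn: "cell_connected (skew_cells l g)" and no_2x2: "no_2x2 (skew_cells l g)"
  shows "\<exists>a b. hook_rows l g a b"
proof -
  define rows where "rows = {i. l i < g i}"
  have "rows \<subseteq> {..<M}"
    using fin by (auto simp: rows_def not_less_eq_eq[symmetric] intro: ccontr)
  then have fin_rows: "finite rows"
    by (rule finite_subset) simp
  obtain c where "c \<in> skew_cells l g"
    using conn by (auto simp: cell_connected_def)
  then have "fst c \<in> rows"
    by (cases c) (auto simp: rows_def skew_cells_def)
  then have "rows \<noteq> {}"
    by blast
  define a where "a = Min rows"
  define b where "b = Max rows"
  have a: "a \<in> rows" and b: "b \<in> rows" and "a \<le> b"
    using fin_rows \<open>rows \<noteq> {}\<close> by (auto simp: a_def b_def)
  have overlap: "l i < g (Suc i)" if "a \<le> i" "i < b" for i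
    using connected_skew_cells_overlap[OF conn _ _ _ that(2)] a b that(1) by (simp add: rows_def)
  have "l i < g i \<longleftrightarrow> a \<le> i \<and> i \<le> b" for i
  proof
    assume i: "a \<le> i \<and> i \<le> b"
    show "l i < g i"
    proof (cases "i = a")
      case False
      then have "l (i - 1) < g (Suc (i - 1))"
        using i by (intro overlap) auto
      moreover have "l i \<le> l (i - 1)" "Suc (i - 1) = i"
        using antl[of "i - 1"] False i by auto
      ultimately show ?thesis by simp
    qed (use a in \<open>simp add: rows_def\<close>)
  qed (use fin_rows in \<open>auto simp: a_def b_def rows_def\<close>)
  moreover have "g (Suc i) = Suc (l i)" if "a \<le> i" "i < b" for i
    using overlap[OF that] no_2x2_skew_cells_iff[of g l, OF antg antl] no_2x2 by (simp add: le_antisym Suc_leI)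
  ultimately show ?thesis
    using \<open>a \<le> b\<close> by (auto simp: hook_rows_def)
qed

lemma no_2x2_if_hook_rows:
  assumes antg: "\<And>i. g (Suc i) \<le> g i" and antl: "\<And>i. l (Suc i) \<le> l i"
    and le: "\<And>i. l i \<le> g i" and hook: "hook_rows l g a b"
  shows "no_2x2 (skew_cells l g)"
  unfolding no_2x2_skew_cells_iff[of g l, OF antg antl]
proof
  fix i
  have chain: "g (Suc i) = Suc (l i)" if "a \<le> i" "i < b" for i
    using hook that by (simp add: hook_rows_def)
  have rows: "l i < g i \<longleftrightarrow> a \<le> i \<and> i \<le> b" for i
    using hook by (simp add: hook_rows_def)
  have outside: "g i = l i" if "\<not> (a \<le> i \<and> i \<le> b)" for i
    using rows[of i] le[of i] that by simp
  consider "a \<le> i \<and> i < b" | "Suc i = a" | "\<not> (a \<le> Suc i \<and> Suc i \<le> b)"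
    by linarith
  then show "g (Suc i) \<le> Suc (l i)"
    by cases (use chain outside[of i] outside[of "Suc i"] antg[of i] antl[of i] in auto)
qed

lemma hook_rows_path_to_top:
  assumes antl: "\<And>i. l (Suc i) \<le> l i" and hook: "hook_rows l g a b"
    and "(a + t, j) \<in> skew_cells l g"
  shows "(adj_in (skew_cells l g))\<^sup>*\<^sup>* (a + t, j) (a, l a)"
  using assms(3)
proof (induction t arbitrary: j)
  case 0
  then show ?case
    using adj_in_skew_cells_along_row[of l a j g] by (simp add: skew_cells_def)
next
  case (Suc t)
  let ?S = "skew_cells l g" and ?i = "a + Suc t"
  have rows: "l i < g i \<longleftrightarrow> a \<le> i \<and> i \<le> b" for i
    using hook by (simp add: hook_rows_def)
  have "a + t < b"
    using Suc.prems rows[of ?i] by (auto simp: skew_cells_def)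
  then have "g ?i = Suc (l (a + t))" "l (a + t) < g (a + t)"
    using hook rows[of "a + t"] by (simp_all add: hook_rows_def)
  then have up: "(a + t, l (a + t)) \<in> ?S" and down: "(?i, l (a + t)) \<in> ?S"
    using antl[of "a + t"] by (auto simp: skew_cells_def)
  have "(adj_in ?S)\<^sup>*\<^sup>* (?i, j) (?i, l ?i)"
    using Suc.prems adj_in_skew_cells_along_row[of l ?i j g] by (simp add: skew_cells_def)
  also have "(adj_in ?S)\<^sup>*\<^sup>* (?i, l ?i) (?i, l (a + t))"
    by (rule adj_in_rtranclp_sym, rule adj_in_skew_cells_along_row)
      (use down in \<open>simp_all add: skew_cells_def\<close>)
  also have "adj_in ?S (?i, l (a + t)) (a + t, l (a + t))"
    using up down by (simp add: adjacent_def)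
  also have "(adj_in ?S)\<^sup>*\<^sup>* (a + t, l (a + t)) (a, l a)"
    using Suc.IH[OF up] .
  finally show ?case .
qed

lemma cell_connected_if_hook_rows:
  assumes antl: "\<And>i. l (Suc i) \<le> l i" and hook: "hook_rows l g a b"
  shows "cell_connected (skew_cells l g)"
  unfolding cell_connected_def
proof (intro conjI ballI)
  let ?S = "skew_cells l g"
  have path: "(adj_in ?S)\<^sup>*\<^sup>* c (a, l a)" if "c \<in> ?S" for c
  proof (cases c)
    case (Pair i j)
    then have "a \<le> i"
      using that hook by (auto simp: skew_cells_def hook_rows_def)
    then show ?thesis
      using hook_rows_path_to_top[OF antl hook, of "i - a" j] that Pair by simp
  qed
  fix c d assume c: "c \<in> ?S" and d: "d \<in> ?S"
  show "(adj_in ?S)\<^sup>*\<^sup>* c d"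
    using path[OF c] adj_in_rtranclp_sym[OF path[OF d]] by (rule rtranclp_trans)
next
  show "skew_cells l g \<noteq> {}"
    using hook by (auto simp: skew_cells_def hook_rows_def)
qed

lemma row_len_antimono:
  "sorted_wrt (\<ge>) la \<Longrightarrow> i \<le> i' \<Longrightarrow> row_len la i' \<le> row_len la i"
  by (auto simp: row_len_def intro: sorted_wrt_ge_nth)

lemma row_len_Suc_le: "sorted_wrt (\<ge>) la \<Longrightarrow> row_len la (Suc i) \<le> row_len la i"
  by (simp add: row_len_antimono)

lemma row_len_pos_iff: "is_partition la \<Longrightarrow> 0 < row_len la i \<longleftrightarrow> i < length la"
  by (auto simp: row_len_def is_partition_def)

lemma row_len_eq_0: "length la \<le> i \<Longrightarrow> row_len la i = 0"
  by (simp add: row_len_def)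

lemma partition_eqI:
  assumes "is_partition la" "is_partition ga" "\<And>i. row_len la i = row_len ga i"
  shows "la = ga"
proof -
  have "length la = length ga"
    using row_len_pos_iff[OF assms(1)] row_len_pos_iff[OF assms(2)] assms(3)
    by (metis linorder_neqE_nat order_less_irrefl)
  moreover have "la ! i = ga ! i" if "i < length la" for i
    using assms(3)[of i] that \<open>length la = length ga\<close> by (simp add: row_len_def)
  ultimately show ?thesis
    by (rule nth_equalityI)
qed

lemma psize_eq_sum_row_len: "length la \<le> m \<Longrightarrow> psize la = (\<Sum>i<m. row_len la i)"
  by (subst sum.mono_neutral_right[of "{..<m}" "{..<length la}"])
    (auto simp: row_len_def psize_eq_sum)

lemma diagram_subset_iff: "diagram la \<subseteq> diagram ga \<longleftrightarrow> (\<forall>i. row_len la i \<le> row_len ga i)"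
proof
  assume sub: "diagram la \<subseteq> diagram ga"
  show "\<forall>i. row_len la i \<le> row_len ga i"
  proof (rule allI, rule ccontr)
    fix i assume "\<not> row_len la i \<le> row_len ga i"
    then have "(i, row_len ga i) \<in> diagram la"
      by (simp add: diagram_row_len)
    then show False
      using sub by (auto simp: diagram_row_len)
  qed
qed (auto simp: diagram_row_len intro: order_less_le_trans)

lemma card_skew:
  "diagram la \<subseteq> diagram ga \<Longrightarrow> card (skew ga la) = psize ga - psize la"
  by (simp add: skew_def card_Diff_subset finite_diagram card_diagram)

definition partition_of_row_len :: "(nat \<Rightarrow> nat) \<Rightarrow> nat \<Rightarrow> nat list" where
  "partition_of_row_len g r = takeWhile (\<lambda>x. 0 < x) (map g [0..<r])"

lemma partition_of_row_len:
  assumes anti: "\<And>i. g (Suc i) \<le> g i" and zero: "\<And>i. r \<le> i \<Longrightarrow> g i = 0"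
  shows "is_partition (partition_of_row_len g r)" "row_len (partition_of_row_len g r) = g"
    "length (partition_of_row_len g r) \<le> r"
proof -
  define la where "la = partition_of_row_len g r"
  have anti': "g i' \<le> g i" if "i \<le> i'" for i i'
    using that by (induction i' rule: dec_induct) (auto intro: order_trans[OF anti])
  have len: "length la \<le> r"
    by (simp add: la_def partition_of_row_len_def length_takeWhile_le[THEN order_trans])
  have nth: "la ! i = g i" if "i < length la" for i
    using that len takeWhile_nth[of i "\<lambda>x. 0 < x" "map g [0..<r]"]
    by (simp add: la_def partition_of_row_len_def)
  have pos: "0 < x" if "x \<in> set la" for x
    using that set_takeWhileD by (fastforce simp: la_def partition_of_row_len_def)
  have "g i = 0" if "length la \<le> i" for i
  proof (cases "r \<le> i")
    case False
    then have "\<not> 0 < map g [0..<r] ! length la"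
      using that len nth_length_takeWhile[of "\<lambda>x. 0 < x" "map g [0..<r]"]
      by (simp add: la_def partition_of_row_len_def)
    then show ?thesis
      using anti'[OF that] False that len by simp
  qed (use zero in simp)
  then show "row_len (partition_of_row_len g r) = g"
    using nth by (auto simp: row_len_def la_def[symmetric])
  show "length (partition_of_row_len g r) \<le> r"
    using len by (simp add: la_def)
  show "is_partition (partition_of_row_len g r)"
    using nth anti' pos by (auto simp: is_partition_def sorted_wrt_iff_nth_less la_def[symmetric])
qed

lemma sum_hook_row_len:
  fixes l g :: "nat \<Rightarrow> nat"
  assumes "a \<le> b" "b < r"
    and out: "\<And>R. R < r \<Longrightarrow> R < a \<or> b < R \<Longrightarrow> g R = l R"
    and mid: "\<And>R. a < R \<Longrightarrow> R \<le> b \<Longrightarrow> g R = Suc (l (R - 1))"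
  shows "(\<Sum>R<r. g R) + l b = (\<Sum>R<r. l R) + g a + (b - a)"
proof -
  define d where "d R = int (g R) - int (l R)" for R
  have "(\<Sum>R<r. d R) = (\<Sum>R\<in>{a..b}. d R)"
    using assms by (intro sum.mono_neutral_right) (auto simp: d_def)
  also have "\<dots> = d a + (\<Sum>R\<in>{Suc a..b}. d R)"
    using \<open>a \<le> b\<close> by (simp add: sum.atLeast_Suc_atMost)
  also have "(\<Sum>R\<in>{Suc a..b}. d R) = (\<Sum>i\<in>{a..<b}. 1 - (int (l (Suc i)) - int (l i)))"
    using mid by (intro sum.reindex_bij_witness[where i=Suc and j="\<lambda>R. R - 1"]) (auto simp: d_def)
  also have "\<dots> = int (b - a) - (int (l b) - int (l a))"
    using sum_Suc_diff'[OF \<open>a \<le> b\<close>, of "\<lambda>i. int (l i)"] \<open>a \<le> b\<close> by (simp add: sum_subtractf)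
  finally have "(\<Sum>R<r. d R) = d a + (int (b - a) - (int (l b) - int (l a)))" .
  moreover have "(\<Sum>R<r. d R) = int (\<Sum>R<r. g R) - int (\<Sum>R<r. l R)"
    by (simp add: d_def sum_subtractf)
  ultimately show ?thesis
    unfolding d_def by linarith
qed

lemma nth_shifted_parts_pad:
  assumes "length la \<le> r" "j < r"
  shows "shifted_parts (la @ replicate (r - length la) 0) ! j = row_len la (r - 1 - j) + j"
  using assms
  by (simp add: nth_shifted_parts row_len_def nth_append)

lemma shifted_parts_snoc_0: "shifted_parts (la @ [0]) = 0 # map Suc (shifted_parts la)"
  by (rule nth_equalityI) (auto simp: nth_shifted_parts nth_append nth_Cons split: nat.split)

lemma jacobi_trudi_shifted_parts_pad:
  assumes "h 0 = 1"
  shows "jacobi_trudi h (shifted_parts (la @ replicate m 0)) = jacobi_trudi h (shifted_parts la)"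
proof (induction m)
  case (Suc m)
  have "la @ replicate (Suc m) 0 = (la @ replicate m 0) @ [0]"
    by (simp add: replicate_append_same[symmetric])
  then show ?case
    using Suc by (simp only: shifted_parts_snoc_0 jacobi_trudi_Cons_0[of h, OF assms])
qed simp

lemma rim_hook_hook_rows:
  assumes "rim_hook ga la k"
  shows "\<exists>a b. hook_rows (row_len la) (row_len ga) a b \<and> b < length ga"
proof -
  have ga: "is_partition ga" and la: "is_partition la"
    and sub: "diagram la \<subseteq> diagram ga"
    and shape: "cell_connected (skew ga la)" "no_2x2 (skew ga la)"
    using assms by (auto simp: rim_hook_def)
  have sorted: "sorted_wrt (\<ge>) ga" "sorted_wrt (\<ge>) la"
    using ga la by (auto simp: is_partition_def)
  obtain a b where hook: "hook_rows (row_len la) (row_len ga) a b"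
    using hook_rows_if_connected_no_2x2[of "row_len ga" "row_len la" "length ga"] shape
      row_len_Suc_le[OF sorted(1)] row_len_Suc_le[OF sorted(2)] row_len_eq_0[of ga]
    by (auto simp: skew_eq_skew_cells)
  then have "row_len la b < row_len ga b"
    by (simp add: hook_rows_def)
  then have "b < length ga"
    by (metis row_len_eq_0 not_less not_less_zero)
  then show ?thesis using hook by blast
qed

lemma length_rim_hook_le:
  assumes "rim_hook ga la k"
  shows "length ga \<le> length la + k"
proof -
  have "(\<lambda>i. (i, 0)) ` {length la..<length ga} \<subseteq> skew ga la"
    using assms by (auto simp: skew_def diagram_def rim_hook_def is_partition_def)
  then have "card ((\<lambda>i. (i, 0::nat)) ` {length la..<length ga}) \<le> card (skew ga la)"
    by (rule card_mono[rotated]) (simp add: skew_def finite_diagram)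
  also have "card (skew ga la) = k"
    using assms by (simp add: rim_hook_def card_skew)
  finally show ?thesis
    by (simp add: card_image inj_on_def)
qed

section \<open>Beads and rim hooks\<close>

text \<open>The shifted parts of \<open>\<lambda>\<close>, padded with zeros to \<open>r\<close> parts, are the positions of \<open>r\<close> beads.
  Moving bead \<open>j\<close> up by \<open>k\<close> onto a free position adds a rim hook of size \<open>k\<close> to \<open>\<lambda>\<close>, spanning rows
  \<open>hook_top j\<close> to \<open>hook_bottom j\<close>; its height is the number of beads jumped over, and every rim hook
  arises from exactly one such move.\<close>

locale abacus =
  fixes la :: "nat list" and k r :: nat
  assumes partition: "is_partition la" and k_pos: "1 \<le> k" and length_le: "length la + k \<le> r"
begin

definition beta :: "nat \<Rightarrow> nat" where
  "beta R = row_len la R + (r - 1 - R)"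

definition betas :: "nat list" where
  "betas = shifted_parts (la @ replicate (r - length la) 0)"

lemma length_betas [simp]: "length betas = r"
  using length_le by (simp add: betas_def)

lemma nth_betas: "j < r \<Longrightarrow> betas ! j = beta (r - 1 - j)"
  using length_le by (simp add: betas_def nth_shifted_parts_pad beta_def)

lemma row_len_la_Suc_le: "row_len la (Suc R) \<le> row_len la R"
  using partition by (simp add: row_len_Suc_le is_partition_def)

lemma row_len_la_antimono: "R \<le> R' \<Longrightarrow> row_len la R' \<le> row_len la R"
  using partition by (simp add: row_len_antimono is_partition_def)

lemma beta_strict_antimono: "R < R' \<Longrightarrow> R' < r \<Longrightarrow> beta R' < beta R"
  using row_len_la_antimono[of R R'] by (simp add: beta_def)

lemma beta_antimono: "R \<le> R' \<Longrightarrow> R' < r \<Longrightarrow> beta R' \<le> beta R"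
  using beta_strict_antimono[of R R'] by (cases "R = R'") auto

definition movable :: "nat set" where
  "movable = {j. j < r \<and> betas ! j + k \<notin> set betas}"

definition hook_bottom :: "nat \<Rightarrow> nat" where
  "hook_bottom j = r - 1 - j"

definition hook_top :: "nat \<Rightarrow> nat" where
  "hook_top j = (LEAST R. beta R < betas ! j + k)"

definition hook_height :: "nat \<Rightarrow> nat" where
  "hook_height j = hook_bottom j - hook_top j"

definition hook_row_len :: "nat \<Rightarrow> nat \<Rightarrow> nat" where
  "hook_row_len j R =
    (if R < hook_top j \<or> hook_bottom j < R then row_len la R
     else if R = hook_top j then row_len la (hook_bottom j) + k - hook_height j
     else Suc (row_len la (R - 1)))"

definition add_hook :: "nat \<Rightarrow> nat list" where
  "add_hook j = partition_of_row_len (hook_row_len j) r"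

definition moved_betas :: "nat \<Rightarrow> nat list" where
  "moved_betas j = take j betas @ take (hook_height j) (drop (Suc j) betas) @
     (betas ! j + k) # drop (Suc j + hook_height j) betas"

context
  fixes j assumes j: "j \<in> movable"
begin

lemma movable_less: "j < r"
  using j by (simp add: movable_def)

lemma hook_bottom_less: "hook_bottom j < r"
  using movable_less by (simp add: hook_bottom_def)

lemma moved_bead_eq: "betas ! j + k = beta (hook_bottom j) + k"
  using movable_less by (simp add: nth_betas hook_bottom_def)

lemma moved_bead_ne_beta: "R < r \<Longrightarrow> betas ! j + k \<noteq> beta R"
  using j nth_mem[of "r - 1 - R" betas] by (auto simp: movable_def nth_betas)

lemma hook_top_le: "hook_top j \<le> hook_bottom j"
  unfolding hook_top_def by (rule Least_le) (use k_pos in \<open>simp add: moved_bead_eq\<close>)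

lemma beta_hook_top_less: "beta (hook_top j) < betas ! j + k"
  unfolding hook_top_def by (rule LeastI[of _ "hook_bottom j"]) (use k_pos in \<open>simp add: moved_bead_eq\<close>)

lemma less_beta_if_less_hook_top: "R < hook_top j \<Longrightarrow> betas ! j + k < beta R"
  using not_less_Least[of R "\<lambda>R. beta R < betas ! j + k"] moved_bead_ne_beta[of R]
    hook_top_le hook_bottom_less
  by (fastforce simp: hook_top_def)

lemma row_len_hook_top_less: "row_len la (hook_top j) + hook_height j < row_len la (hook_bottom j) + k"
  using beta_hook_top_less hook_top_le hook_bottom_less
  by (simp add: beta_def moved_bead_eq hook_height_def)

lemma hook_height_less: "hook_height j < k"
  using row_len_hook_top_less row_len_la_antimono[OF hook_top_le] by simp

lemma row_len_less_hook_row_len_iff: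
  "row_len la R < hook_row_len j R \<longleftrightarrow> hook_top j \<le> R \<and> R \<le> hook_bottom j"
  using row_len_hook_top_less hook_top_le row_len_la_antimono[of "R - 1" R]
  by (auto simp: hook_row_len_def)

lemma row_len_le_hook_row_len: "row_len la R \<le> hook_row_len j R"
  using row_len_less_hook_row_len_iff[of R] by (auto simp: hook_row_len_def)

lemma hook_row_len_Suc_le: "hook_row_len j (Suc R) \<le> hook_row_len j R"
proof -
  consider "Suc R < hook_top j" | "Suc R = hook_top j" | "hook_top j \<le> R" "R < hook_bottom j"
    | "hook_bottom j \<le> R"
    by linarith
  then show ?thesis
  proof cases
    case 2
    then have "betas ! j + k < beta R"
      by (intro less_beta_if_less_hook_top) simp
    then show ?thesis
      using 2 hook_top_le hook_bottom_less
      by (simp add: hook_row_len_def beta_def moved_bead_eq hook_height_def)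
  next
    case 3
    then show ?thesis
      using row_len_less_hook_row_len_iff[of R] by (simp add: hook_row_len_def)
  next
    case 4
    then show ?thesis
      using row_len_la_Suc_le[of R] row_len_le_hook_row_len[of R] by (simp add: hook_row_len_def)
  qed (simp add: hook_row_len_def row_len_la_Suc_le)
qed

lemma hook_row_len_eq_0: "r \<le> R \<Longrightarrow> hook_row_len j R = 0"
  using hook_bottom_less length_le by (simp add: hook_row_len_def row_len_eq_0)

lemma hook_rows_add_hook: "hook_rows (row_len la) (hook_row_len j) (hook_top j) (hook_bottom j)"
  using hook_top_le row_len_less_hook_row_len_iff by (simp add: hook_rows_def hook_row_len_def)

lemma add_hook:
  "is_partition (add_hook j)" "row_len (add_hook j) = hook_row_len j" "length (add_hook j) \<le> r"
  using partition_of_row_len[of "hook_row_len j" r, OF hook_row_len_Suc_le hook_row_len_eq_0]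
  by (simp_all add: add_hook_def)

lemma psize_add_hook: "psize (add_hook j) = psize la + k"
proof -
  have "(\<Sum>R<r. hook_row_len j R) + row_len la (hook_bottom j) =
      (\<Sum>R<r. row_len la R) + hook_row_len j (hook_top j) + (hook_bottom j - hook_top j)"
    using hook_top_le hook_bottom_less
    by (intro sum_hook_row_len) (auto simp: hook_row_len_def)
  moreover have "hook_row_len j (hook_top j) + (hook_bottom j - hook_top j) = row_len la (hook_bottom j) + k"
    using hook_height_less hook_top_le by (simp add: hook_row_len_def hook_height_def)
  ultimately show ?thesis
    using psize_eq_sum_row_len[of "add_hook j" r] psize_eq_sum_row_len[of la r] add_hook length_le
    by simp
qed

lemma rim_hook_add_hook: "rim_hook (add_hook j) la k"
  using no_2x2_if_hook_rows[OF hook_row_len_Suc_le row_len_la_Suc_le row_len_le_hook_row_len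
      hook_rows_add_hook]
    cell_connected_if_hook_rows[OF row_len_la_Suc_le hook_rows_add_hook]
    add_hook partition psize_add_hook row_len_le_hook_row_len
  by (simp add: rim_hook_def skew_eq_skew_cells diagram_subset_iff)

lemma ht_add_hook: "ht (add_hook j) la = hook_height j"
  using fst_skew_cells[OF hook_rows_add_hook]
  by (simp add: ht_def skew_eq_skew_cells add_hook hook_height_def)

lemma nth_moved_betas:
  assumes "i < r"
  shows "moved_betas j ! i = (if i < j then betas ! i else if i < j + hook_height j then betas ! Suc i
    else if i = j + hook_height j then betas ! j + k else betas ! i)"
  using assms movable_less hook_top_le hook_bottom_less
  by (auto simp: moved_betas_def nth_append min_def hook_height_def hook_bottom_def nth_Cons'
      not_less)

lemma shifted_parts_add_hook:
  "shifted_parts (add_hook j @ replicate (r - length (add_hook j)) 0) = moved_betas j"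
proof (rule nth_equalityI)
  fix i assume "i < length (shifted_parts (add_hook j @ replicate (r - length (add_hook j)) 0))"
  then have i: "i < r"
    using add_hook by simp
  have "shifted_parts (add_hook j @ replicate (r - length (add_hook j)) 0) ! i = hook_row_len j (r - 1 - i) + i"
    using nth_shifted_parts_pad[OF add_hook(3) i] add_hook by simp
  also have "\<dots> = moved_betas j ! i"
    using i movable_less hook_top_le hook_bottom_less hook_height_less
    by (auto simp: nth_moved_betas nth_betas beta_def hook_row_len_def hook_height_def hook_bottom_def
        Suc_diff_Suc)
  finally show "shifted_parts (add_hook j @ replicate (r - length (add_hook j)) 0) ! i = moved_betas j ! i" .
qed (use add_hook movable_less hook_top_le hook_bottom_less in
    \<open>auto simp: moved_betas_def min_def hook_height_def hook_bottom_def\<close>)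

lemma jacobi_trudi_move_bead:
  "jacobi_trudi h (betas[j := betas ! j + k]) = (-1) ^ hook_height j * jacobi_trudi h (moved_betas j)"
proof -
  have "betas[j := betas ! j + k] = take j betas @ (betas ! j + k) # drop (Suc j) betas"
    using movable_less by (simp add: upd_conv_take_nth_drop)
  also have "drop (Suc j) betas =
      take (hook_height j) (drop (Suc j) betas) @ drop (Suc j + hook_height j) betas"
    by (metis append_take_drop_id drop_drop add.commute)
  finally have "betas[j := betas ! j + k] = take j betas @ (betas ! j + k) #
      take (hook_height j) (drop (Suc j) betas) @ drop (Suc j + hook_height j) betas" .
  moreover have "length (take (hook_height j) (drop (Suc j) betas)) = hook_height j"
    using movable_less hook_top_le hook_bottom_less by (simp add: hook_height_def hook_bottom_def)
  ultimately show ?thesis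
    by (simp add: jacobi_trudi_move moved_betas_def)
qed

end

lemma add_hook_inj: "inj_on add_hook movable"
proof (rule inj_onI)
  fix j j' assume j: "j \<in> movable" and j': "j' \<in> movable" and eq: "add_hook j = add_hook j'"
  have "hook_row_len j = hook_row_len j'"
    using add_hook(2)[OF j] add_hook(2)[OF j'] eq by simp
  then have "hook_top j \<le> R \<and> R \<le> hook_bottom j \<longleftrightarrow> hook_top j' \<le> R \<and> R \<le> hook_bottom j'" for R
    using row_len_less_hook_row_len_iff[OF j, of R] row_len_less_hook_row_len_iff[OF j', of R] by simp
  then have "hook_bottom j = hook_bottom j'"
    using hook_top_le[OF j] hook_top_le[OF j'] by (meson le_antisym order_refl)
  then show "j = j'"
    using movable_less[OF j] movable_less[OF j'] by (simp add: hook_bottom_def)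
qed

lemma jacobi_trudi_raise_eq_0_if_not_movable:
  assumes j: "j < r" "j \<notin> movable"
  shows "jacobi_trudi h (betas[j := betas ! j + k]) = 0"
proof -
  obtain i where i: "i < r" "betas ! i = betas ! j + k"
    using j by (auto simp: movable_def in_set_conv_nth)
  then have "i \<noteq> j"
    using k_pos by auto
  then show ?thesis
    using i j by (intro jacobi_trudi_eq_0_if_repeated[of i _ j]) (auto simp: nth_list_update)
qed

context
  fixes ga a b
  assumes rim: "rim_hook ga la k" and hook: "hook_rows (row_len la) (row_len ga) a b" and b: "b < r"
begin

lemma hook_le_bottom: "a \<le> b"
  using hook by (simp add: hook_rows_def)

lemma row_len_rim_hook_outside:
  assumes "R < a \<or> b < R"
  shows "row_len ga R = row_len la R"
proof -
  have "\<not> row_len la R < row_len ga R"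
    using hook assms by (auto simp: hook_rows_def)
  moreover have "row_len la R \<le> row_len ga R"
    using rim by (simp add: rim_hook_def diagram_subset_iff)
  ultimately show ?thesis by simp
qed

lemma row_len_rim_hook_inside: "a < R \<Longrightarrow> R \<le> b \<Longrightarrow> row_len ga R = Suc (row_len la (R - 1))"
  using hook by (cases R) (auto simp: hook_rows_def)

lemma row_len_rim_hook_top: "row_len ga a + (b - a) = row_len la b + k"
proof -
  have "(\<Sum>R<r. row_len ga R) + row_len la b = (\<Sum>R<r. row_len la R) + row_len ga a + (b - a)"
    using hook_le_bottom b row_len_rim_hook_outside row_len_rim_hook_inside by (rule sum_hook_row_len)
  moreover have "length ga \<le> r"
    using length_rim_hook_le[OF rim] length_le by simp
  ultimately show ?thesis
    using rim psize_eq_sum_row_len[of ga r] psize_eq_sum_row_len[of la r] length_le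
    by (simp add: rim_hook_def)
qed

lemma rim_hook_beta_strict_antimono:
  "R < R' \<Longrightarrow> R' < r \<Longrightarrow> row_len ga R' + (r - 1 - R') < row_len ga R + (r - 1 - R)"
  using rim row_len_antimono[of ga R R'] by (simp add: rim_hook_def is_partition_def)

lemma moved_hook_bead: "betas ! (r - 1 - b) + k = row_len ga a + (r - 1 - a)"
  using row_len_rim_hook_top hook_le_bottom b by (simp add: nth_betas beta_def)

lemma beta_eq_rim_hook_beta:
  "R < a \<Longrightarrow> beta R = row_len ga R + (r - 1 - R)"
  "a \<le> R \<Longrightarrow> R < b \<Longrightarrow> beta R = row_len ga (Suc R) + (r - 1 - Suc R)"
  using row_len_rim_hook_outside[of R] row_len_rim_hook_inside[of "Suc R"] b
  by (auto simp: beta_def)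

lemma movable_hook_bead: "r - 1 - b \<in> movable"
proof -
  have ne: "betas ! (r - 1 - b) + k \<noteq> beta R" if R: "R < r" for R
  proof (cases "R < b")
    case True
    then show ?thesis
      using R moved_hook_bead beta_eq_rim_hook_beta rim_hook_beta_strict_antimono[of a "Suc R"]
        rim_hook_beta_strict_antimono[of R a] b hook_le_bottom by (cases "R < a") auto
  next
    case False
    then have "beta R \<le> beta b"
      using R by (intro beta_antimono) simp
    then show ?thesis
      using b k_pos by (simp add: nth_betas)
  qed
  have "betas ! (r - 1 - b) + k \<notin> set betas"
  proof
    assume "betas ! (r - 1 - b) + k \<in> set betas"
    then obtain i where "i < r" "betas ! i = betas ! (r - 1 - b) + k"
      by (auto simp: in_set_conv_nth)
    then show False
      using ne[of "r - 1 - i"] by (simp add: nth_betas)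
  qed
  then show ?thesis
    using b by (simp add: movable_def)
qed

lemma hook_top_hook_bead: "hook_top (r - 1 - b) = a"
  unfolding hook_top_def
proof (rule Least_equality)
  show "beta a < betas ! (r - 1 - b) + k"
  proof (cases "a < b")
    case True
    then show ?thesis
      using moved_hook_bead beta_eq_rim_hook_beta(2)[of a] rim_hook_beta_strict_antimono[of a "Suc a"] b
      by simp
  next
    case False
    then show ?thesis
      using hook_le_bottom b k_pos by (simp add: nth_betas)
  qed
  show "a \<le> R" if "beta R < betas ! (r - 1 - b) + k" for R
    using that moved_hook_bead beta_eq_rim_hook_beta(1)[of R] rim_hook_beta_strict_antimono[of R a]
      hook_le_bottom b by (cases "R < a") auto
qed

lemma add_hook_hook_bead: "add_hook (r - 1 - b) = ga"
proof -
  have "hook_row_len (r - 1 - b) R = row_len ga R" for R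
    using hook_top_hook_bead row_len_rim_hook_outside[of R] row_len_rim_hook_inside[of R]
      row_len_rim_hook_top hook_le_bottom b
    by (auto simp: hook_row_len_def hook_bottom_def hook_height_def)
  then show ?thesis
    using add_hook[OF movable_hook_bead] rim
    by (intro partition_eqI) (auto simp: rim_hook_def)
qed

end

lemma add_hook_bij: "bij_betw add_hook movable {ga. rim_hook ga la k}"
proof -
  have "ga \<in> add_hook ` movable" if rim: "rim_hook ga la k" for ga
  proof -
    obtain a b where "hook_rows (row_len la) (row_len ga) a b" "b < length ga"
      using rim_hook_hook_rows[OF rim] by blast
    moreover have "length ga \<le> r"
      using length_rim_hook_le[OF rim] length_le by simp
    ultimately show ?thesis
      using rim movable_hook_bead add_hook_hook_bead by (metis image_eqI order_less_le_trans)
  qed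
  then show ?thesis
    using add_hook_inj rim_hook_add_hook by (auto simp: bij_betw_def)
qed

lemma sum_jacobi_trudi_raise_betas:
  assumes "h 0 = 1"
  shows "(\<Sum>j<r. jacobi_trudi h (betas[j := betas ! j + k])) =
    (\<Sum>ga\<in>{ga. rim_hook ga la k}. (-1) ^ ht ga la * jacobi_trudi h (shifted_parts ga))"
proof -
  have "(\<Sum>j<r. jacobi_trudi h (betas[j := betas ! j + k])) =
      (\<Sum>j\<in>movable. jacobi_trudi h (betas[j := betas ! j + k]))"
    using jacobi_trudi_raise_eq_0_if_not_movable by (intro sum.mono_neutral_right) (auto simp: movable_def)
  also have "\<dots> = (\<Sum>j\<in>movable. (-1) ^ ht (add_hook j) la * jacobi_trudi h (shifted_parts (add_hook j)))"
    by (intro sum.cong refl) (simp add: jacobi_trudi_move_bead ht_add_hook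
        jacobi_trudi_shifted_parts_pad[of h, OF assms] flip: shifted_parts_add_hook)
  also have "\<dots> = (\<Sum>ga\<in>{ga. rim_hook ga la k}. (-1) ^ ht ga la * jacobi_trudi h (shifted_parts ga))"
    by (rule sum.reindex_bij_betw[OF add_hook_bij])
  finally show ?thesis .
qed

lemma betas_initial: "j < k \<Longrightarrow> betas ! j = j"
  using length_le by (simp add: nth_betas beta_def row_len_eq_0)

lemma jacobi_trudi_betas: "h 0 = 1 \<Longrightarrow> jacobi_trudi h betas = jacobi_trudi h (shifted_parts la)"
  unfolding betas_def by (rule jacobi_trudi_shifted_parts_pad)

end

section \<open>Rim hook formulas for Appell--Schur polynomials\<close>

lemma smult_sum_right: "smult a (sum f A) = (\<Sum>x\<in>A. smult a (f x))"
  by (induction A rule: infinite_finite_induct) (simp_all add: smult_add_right)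

lemma smult_minus_one_power: "smult ((-1) ^ n) p = (-1) ^ n * (p :: 'a::comm_ring_1 poly)"
  by (induction n) (simp_all add: smult_minus_left)

lemma rim_hook_sum_appell_schur:
  assumes "appell A" and c: "\<forall>k\<ge>1. fps_nth (fps_log (appell_f A)) k = c k / fact k"
    and "is_partition la" and "1 \<le> k"
  shows "(\<Sum>ga\<in>{ga. rim_hook ga la k}. smult ((-1) ^ ht ga la * of_nat (F ga)) (appell_schur A ga)) =
    smult (fact (psize la + k)) (appell_power_sum c k * jacobi_trudi (appell_coeff A) (shifted_parts la))"
proof -
  interpret abacus la k "length la + k"
    using assms by unfold_locales auto
  let ?h = "appell_coeff A"
  have h0: "?h 0 = 1"
    using assms(1) by (rule appell_coeff_0)
  have "(\<Sum>ga\<in>{ga. rim_hook ga la k}. smult ((-1) ^ ht ga la * of_nat (F ga)) (appell_schur A ga)) =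
      smult (fact (psize la + k)) (\<Sum>ga\<in>{ga. rim_hook ga la k}. (-1) ^ ht ga la * jacobi_trudi ?h (shifted_parts ga))"
    unfolding smult_sum_right
  proof (intro sum.cong refl)
    fix ga assume "ga \<in> {ga. rim_hook ga la k}"
    then have "sorted_wrt (\<ge>) ga" "psize ga = psize la + k"
      by (auto simp: rim_hook_def is_partition_def)
    then have "smult ((-1) ^ ht ga la * of_nat (F ga)) (appell_schur A ga) =
        smult ((-1) ^ ht ga la) (smult (fact (psize la + k)) (jacobi_trudi ?h (shifted_parts ga)))"
      by (simp add: num_SYT_appell_schur[OF assms(1)] flip: smult_smult)
    then show "smult ((-1) ^ ht ga la * of_nat (F ga)) (appell_schur A ga) =
        smult (fact (psize la + k)) ((-1) ^ ht ga la * jacobi_trudi ?h (shifted_parts ga))"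
      by (metis smult_minus_one_power smult_smult mult.commute)
  qed
  also have "(\<Sum>ga\<in>{ga. rim_hook ga la k}. (-1) ^ ht ga la * jacobi_trudi ?h (shifted_parts ga)) =
      (\<Sum>j<length la + k. jacobi_trudi ?h (betas[j := betas ! j + k]))"
    by (rule sum_jacobi_trudi_raise_betas[of ?h, OF h0, symmetric])
  also have "\<dots> = (\<Sum>d<k. of_nat (k - d) * inv_seq ?h d * ?h (k - d)) * jacobi_trudi ?h betas"
    using jacobi_trudi_raise_sum[OF inv_seq_convolution[of ?h, OF h0], of k betas] \<open>1 \<le> k\<close> betas_initial
    by simp
  also have "\<dots> = appell_power_sum c k * jacobi_trudi ?h (shifted_parts la)"
    by (simp only: appell_power_sum_eq[OF assms(1) c \<open>1 \<le> k\<close>] jacobi_trudi_betas[of ?h, OF h0])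
  finally show ?thesis .
qed

lemma skew_eq_singleton:
  assumes "diagram la \<subseteq> diagram ga" "psize ga = psize la + 1"
  obtains x where "skew ga la = {x}"
  using assms card_skew[of la ga] by (metis card_1_singletonE add_diff_cancel_left')

lemma covers_iff_rim_hook_1: "covers ga la \<longleftrightarrow> rim_hook ga la 1"
proof
  assume "covers ga la"
  moreover from this obtain x where "skew ga la = {x}"
    by (auto simp: covers_def elim: skew_eq_singleton)
  ultimately show "rim_hook ga la 1"
    by (cases x) (auto simp: covers_def rim_hook_def cell_connected_def no_2x2_def)
qed (simp add: covers_def rim_hook_def)

lemma ht_rim_hook_1: "rim_hook ga la 1 \<Longrightarrow> ht ga la = 0"
  by (auto simp: rim_hook_def ht_def elim: skew_eq_singleton)

context
  fixes A :: "nat \<Rightarrow> 'a::field_char_0 poly" and c :: "nat \<Rightarrow> 'a" and la :: "nat list"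
  assumes appell: "appell A"
    and c: "\<forall>k\<ge>1. fps_nth (fps_log (appell_f A)) k = c k / fact k"
    and partition: "is_partition la"
begin

lemma num_SYT_appell_schur_la:
  "smult (of_nat (F la)) (appell_schur A la) =
    smult (fact (psize la)) (jacobi_trudi (appell_coeff A) (shifted_parts la))"
  using num_SYT_appell_schur[OF appell] partition by (simp add: is_partition_def)

lemma appell_schur_covers:
  "smult (of_nat ((psize la + 1) * F la)) ([:c 1, 1:] * appell_schur A la) =
    (\<Sum>ga\<in>{ga. covers ga la}. smult (of_nat (F ga)) (appell_schur A ga))"
proof -
  define J where "J = jacobi_trudi (appell_coeff A) (shifted_parts la)"
  have "smult (of_nat ((psize la + 1) * F la)) ([:c 1, 1:] * appell_schur A la) =
      [:c 1, 1:] * smult (of_nat (psize la + 1)) (smult (of_nat (F la)) (appell_schur A la))"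
    by (simp only: mult_smult_right smult_smult of_nat_mult)
  also have "\<dots> = smult (fact (psize la + 1)) ([:c 1, 1:] * J)"
    by (simp only: num_SYT_appell_schur_la J_def mult_smult_right smult_smult) (simp add: algebra_simps)
  also have "\<dots> = (\<Sum>ga\<in>{ga. rim_hook ga la 1}. smult ((-1) ^ ht ga la * of_nat (F ga)) (appell_schur A ga))"
    using rim_hook_sum_appell_schur[OF appell c partition, of 1]
    by (simp add: J_def appell_power_sum_def)
  also have "\<dots> = (\<Sum>ga\<in>{ga. covers ga la}. smult (of_nat (F ga)) (appell_schur A ga))"
    by (intro sum.cong) (auto simp: covers_iff_rim_hook_1 ht_rim_hook_1)
  finally show ?thesis .
qed

lemma appell_schur_rim_hooks:
  assumes "2 \<le> k"
  shows "smult (of_nat k * c k * of_nat ((psize la + k) choose k) * of_nat (F la)) (appell_schur A la) =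
    (\<Sum>ga\<in>{ga. rim_hook ga la k}. smult ((-1) ^ ht ga la * of_nat (F ga)) (appell_schur A ga))"
proof -
  define J where "J = jacobi_trudi (appell_coeff A) (shifted_parts la)"
  have "(of_nat ((psize la + k) choose k) :: 'a) = fact (psize la + k) / (fact k * fact (psize la))"
    using binomial_fact[of k "psize la + k"] by simp
  then have coeff: "(of_nat k * c k * of_nat ((psize la + k) choose k) * fact (psize la) :: 'a) =
      fact (psize la + k) * (of_nat k * c k / fact k)"
    by (simp add: field_simps)
  have "smult (of_nat k * c k * of_nat ((psize la + k) choose k) * of_nat (F la)) (appell_schur A la) =
      smult (of_nat k * c k * of_nat ((psize la + k) choose k)) (smult (of_nat (F la)) (appell_schur A la))"
    by (simp add: mult_ac)
  also have "\<dots> = smult (of_nat k * c k * of_nat ((psize la + k) choose k) * fact (psize la)) J"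
    by (simp add: num_SYT_appell_schur_la J_def)
  also have "\<dots> = smult (fact (psize la + k) * (of_nat k * c k / fact k)) J"
    by (simp only: coeff)
  also have "\<dots> = (\<Sum>ga\<in>{ga. rim_hook ga la k}. smult ((-1) ^ ht ga la * of_nat (F ga)) (appell_schur A ga))"
    using rim_hook_sum_appell_schur[OF appell c partition, of k] assms
    by (simp add: J_def appell_power_sum_def)
  finally show ?thesis .
qed

end

theorem theorem6p2:
  fixes A :: "nat \<Rightarrow> 'a::field_char_0 poly" and c :: "nat \<Rightarrow> 'a" and la :: "nat list"
  assumes "appell A"
    and "\<forall>k\<ge>1. fps_nth (fps_log (appell_f A)) k = c k / fact k"
    and "is_partition la"
  shows "smult (of_nat ((psize la + 1) * F la)) ([:c 1, 1:] * appell_schur A la)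
           = (\<Sum>ga\<in>{ga. covers ga la}. smult (of_nat (F ga)) (appell_schur A ga))
         \<and> (\<forall>k\<ge>2.
           smult (of_nat k * c k * of_nat ((psize la + k) choose k) * of_nat (F la)) (appell_schur A la)
           = (\<Sum>ga\<in>{ga. rim_hook ga la k}. smult ((-1) ^ ht ga la * of_nat (F ga)) (appell_schur A ga)))"
  using appell_schur_covers[OF assms] appell_schur_rim_hooks[OF assms] by blast

end
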